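(* Let $(V,\{\nu_n\})$ be an $L^\infty$-MOS with unitization $(V_1,\{u_n\})$. For every $n$, $A\in M_n(V)_{sa}$ and $X\in(M_n)_{sa}$, the set $\{t>0: X_t\gg0,\ \nu_n(X_t^{-1/2}AX_t^{-1/2})\le1\}$ is nonempty, so $u_n(A,X)$ is a well-defined nonnegative real number. Moreover, for $B\in M_k(V)_{sa}$, $Y\in(M_k)_{sa}$ and $Z\in M_{n,k}$: $u_{n+k}((A\oplus B,X\oplus Y))=\max\{u_n(A,X),u_k(B,Y)\}$ and $u_k(Z^*AZ,Z^*XZ)\le\|Z\|^2u_n(A,X)$.
   Context: A gauge on a real vector space is a map $\nu$ into $[0,\infty)$ with $\nu(x+y)\le\nu(x)+\nu(y)$, $\nu(tx)=t\nu(x)$ ($t>0$); it is proper if $\nu(x)=\nu(-x)=0$ implies $x=0$. An $L^\infty$-matricially ordered space ($L^\infty$-MOS) is a complex $*$-vector space $V$ (with $M_n(V)$ carrying $(x_{ij})^*=(x_{ji}^* )$, and $M_n(V)_{sa}$ the self-adjoint part) together with proper gauges $\nu_n:M_n(V)_{sa}\to[0,\infty)$ such that $\nu_k(X^*AX)\le\|X\|^2\nu_n(A)$ for scalar $X\in M_{n,k}$, and $\nu_{n+k}(A\oplus B)=\max\{\nu_n(A),\nu_k(B)\}$. Unitization: $V_1=V\oplus\mathbb{C}$ with $M_{n,m}(V_1)$ identified with $M_{n,m}(V)\oplus M_{n,m}$ and $(A,X)^*=(A^*,X^* )$; for $X\in M_n$ set $X_t=tI_n-X$; for a scalar square matrix,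 $Y\gg0$ means $Y$ is positive and invertible; define $u_n(A,X)=\inf\{t>0:X_t\gg0,\ \nu_n(X_t^{-1/2}AX_t^{-1/2})\le1\}$ for $(A,X)\in M_n(V_1)_{sa}$. *)

theory Defs
  imports "Jordan_Normal_Form.Schur_Decomposition"
begin

definition cstar_space :: "(complex \<Rightarrow> 'v::ab_group_add \<Rightarrow> 'v) \<Rightarrow> ('v \<Rightarrow> 'v) \<Rightarrow> bool" where
  "cstar_space sc st \<longleftrightarrow>
     (\<forall>a x y. sc a (x + y) = sc a x + sc a y) \<and>
     (\<forall>a b x. sc (a + b) x = sc a x + sc b x) \<and>
     (\<forall>a b x. sc (a * b) x = sc a (sc b x)) \<and>
     (\<forall>x. sc 1 x = x) \<and>
     (\<forall>x y. st (x + y) = st x + st y) \<and>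
     (\<forall>a x. st (sc a x) = sc (cnj a) (st x)) \<and>
     (\<forall>x. st (st x) = x)"

definition vmat_star :: "('v \<Rightarrow> 'v) \<Rightarrow> 'v mat \<Rightarrow> 'v mat" where
  "vmat_star st A = mat (dim_col A) (dim_row A) (\<lambda>(i,j). st (A $$ (j,i)))"

definition vmat_sa :: "('v \<Rightarrow> 'v) \<Rightarrow> nat \<Rightarrow> 'v mat set" where
  "vmat_sa st n = {A. A \<in> carrier_mat n n \<and> vmat_star st A = A}"

text \<open>Product L A R of scalar matrices L, R with a V-valued matrix A.\<close>
definition vmat_triple :: "(complex \<Rightarrow> 'v::ab_group_add \<Rightarrow> 'v) \<Rightarrow> complex mat \<Rightarrow> 'v mat \<Rightarrow> complex mat \<Rightarrow> 'v mat" where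
  "vmat_triple sc L A R = mat (dim_row L) (dim_col R)
     (\<lambda>(p,q). \<Sum>i<dim_row A. \<Sum>j<dim_col A. sc (L $$ (p,i) * R $$ (j,q)) (A $$ (i,j)))"

definition vmat_rscale :: "(complex \<Rightarrow> 'v \<Rightarrow> 'v) \<Rightarrow> real \<Rightarrow> 'v mat \<Rightarrow> 'v mat" where
  "vmat_rscale sc t A = map_mat (sc (complex_of_real t)) A"

definition proper_gauge_on :: "(complex \<Rightarrow> 'v::ab_group_add \<Rightarrow> 'v) \<Rightarrow> 'v mat set \<Rightarrow> ('v mat \<Rightarrow> real) \<Rightarrow> bool" where
  "proper_gauge_on sc S g \<longleftrightarrow>
     (\<forall>x\<in>S. 0 \<le> g x) \<and>
     (\<forall>x\<in>S. \<forall>y\<in>S. g (x + y) \<le> g x + g y) \<and>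
     (\<forall>x\<in>S. \<forall>t>0. g (vmat_rscale sc t x) = t * g x) \<and>
     (\<forall>x\<in>S. g x = 0 \<and> g (- x) = 0 \<longrightarrow> x = 0\<^sub>m (dim_row x) (dim_col x))"

definition cvec_norm :: "complex vec \<Rightarrow> real" where
  "cvec_norm v = sqrt (\<Sum>i<dim_vec v. (cmod (v $ i))\<^sup>2)"

definition op_norm :: "complex mat \<Rightarrow> real" where
  "op_norm X = Sup {cvec_norm (X *\<^sub>v v) | v. v \<in> carrier_vec (dim_col X) \<and> cvec_norm v \<le> 1}"

definition direct_sum :: "'a::zero mat \<Rightarrow> 'a mat \<Rightarrow> 'a mat" where
  "direct_sum A B = four_block_mat A (0\<^sub>m (dim_row A) (dim_col B)) (0\<^sub>m (dim_row B) (dim_col A)) B"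

definition is_LinfMOS :: "(complex \<Rightarrow> 'v::ab_group_add \<Rightarrow> 'v) \<Rightarrow> ('v \<Rightarrow> 'v) \<Rightarrow> (nat \<Rightarrow> 'v mat \<Rightarrow> real) \<Rightarrow> bool" where
  "is_LinfMOS sc st \<nu> \<longleftrightarrow>
     cstar_space sc st \<and>
     (\<forall>n\<ge>1. proper_gauge_on sc (vmat_sa st n) (\<nu> n)) \<and>
     (\<forall>n\<ge>1. \<forall>k\<ge>1. \<forall>A\<in>vmat_sa st n. \<forall>X\<in>carrier_mat n k.
        \<nu> k (vmat_triple sc (mat_adjoint X) A X) \<le> (op_norm X)\<^sup>2 * \<nu> n A) \<and>
     (\<forall>n\<ge>1. \<forall>k\<ge>1. \<forall>A\<in>vmat_sa st n. \<forall>B\<in>vmat_sa st k.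
        \<nu> (n + k) (direct_sum A B) = max (\<nu> n A) (\<nu> k B))"

definition cmat_sa :: "nat \<Rightarrow> complex mat set" where
  "cmat_sa n = {X. X \<in> carrier_mat n n \<and> mat_adjoint X = X}"

definition cmat_pos :: "nat \<Rightarrow> complex mat \<Rightarrow> bool" where
  "cmat_pos n Y \<longleftrightarrow> Y \<in> cmat_sa n \<and>
     (\<forall>v\<in>carrier_vec n. 0 \<le> Re (\<Sum>i<n. cnj (v $ i) * (Y *\<^sub>v v) $ i))"

definition cmat_pd :: "nat \<Rightarrow> complex mat \<Rightarrow> bool" where
  "cmat_pd n Y \<longleftrightarrow> cmat_pos n Y \<and> invertible_mat Y"

definition cmat_sqrt :: "nat \<Rightarrow> complex mat \<Rightarrow> complex mat" where
  "cmat_sqrt n Y = (THE S. cmat_pos n S \<and> S * S = Y)"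

definition cmat_inv :: "nat \<Rightarrow> complex mat \<Rightarrow> complex mat" where
  "cmat_inv n Y = (THE Z. Z \<in> carrier_mat n n \<and> Y * Z = 1\<^sub>m n \<and> Z * Y = 1\<^sub>m n)"

definition cmat_invsqrt :: "nat \<Rightarrow> complex mat \<Rightarrow> complex mat" where
  "cmat_invsqrt n Y = cmat_sqrt n (cmat_inv n Y)"

definition shiftm :: "nat \<Rightarrow> real \<Rightarrow> complex mat \<Rightarrow> complex mat" where
  "shiftm n t X = complex_of_real t \<cdot>\<^sub>m 1\<^sub>m n - X"

definition unit_set :: "(complex \<Rightarrow> 'v::ab_group_add \<Rightarrow> 'v) \<Rightarrow> (nat \<Rightarrow> 'v mat \<Rightarrow> real) \<Rightarrow> nat \<Rightarrow> 'v mat \<Rightarrow> complex mat \<Rightarrow> real set" where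
  "unit_set sc \<nu> n A X = {t. t > 0 \<and> cmat_pd n (shiftm n t X) \<and>
      \<nu> n (vmat_triple sc (cmat_invsqrt n (shiftm n t X)) A (cmat_invsqrt n (shiftm n t X))) \<le> 1}"

definition unit_gauge :: "(complex \<Rightarrow> 'v::ab_group_add \<Rightarrow> 'v) \<Rightarrow> (nat \<Rightarrow> 'v mat \<Rightarrow> real) \<Rightarrow> nat \<Rightarrow> 'v mat \<Rightarrow> complex mat \<Rightarrow> real" where
  "unit_gauge sc \<nu> n A X = Inf (unit_set sc \<nu> n A X)"

end

theory Submission
  imports Defs "Jordan_Normal_Form.Spectral_Radius"
begin

text \<open>
  Write S(A,X) = {t > 0. X_t \<gg> 0 \<and> \<nu>_n(X_t^-1/2 A X_t^-1/2) \<le> 1}, so that u_n(A,X) = inf S(A,X).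
  Everything rests on a comparison principle: if P, Q \<gg> 0 and Z^* P Z \<le> Q, then
  W = P^1/2 Z Q^-1/2 is a contraction and Q^-1/2 Z^* A Z Q^-1/2 = W^* (P^-1/2 A P^-1/2) W, so the
  compatibility axiom gives \<nu>_k(Q^-1/2 Z^*AZ Q^-1/2) \<le> \<nu>_n(P^-1/2 A P^-1/2).
  Since Z^* X_t Z \<le> (Z^*XZ)_s - (s - \<parallel>Z\<parallel>^2 t) I, every s > \<parallel>Z\<parallel>^2 t lies in S(Z^*AZ, Z^*XZ)
  when t lies in S(A,X); this gives the congruence inequality, and for Z = I it shows that
  S(A,X) is upward closed. S(A,X) is nonempty because X_t \<ge> (\<nu>_n(A) + 1) I for large t, whence
  \<parallel>X_t^-1/2\<parallel>^2 \<le> 1/(\<nu>_n(A) + 1). Finally, positive square roots are unique (by the spectral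
  theorem), so (X \<oplus> Y)_t^-1/2 = X_t^-1/2 \<oplus> Y_t^-1/2; by the direct-sum axiom S of a direct sum is
  the intersection of two upward closed sets, whose infimum is the maximum of the two infima.
\<close>

section \<open>Adjoints, inner products and quadratic forms\<close>

lemma mat_adjoint_eq_mat:
  "mat_adjoint (A::complex mat) = mat (dim_col A) (dim_row A) (\<lambda>(i,j). cnj (A $$ (j,i)))"
  by (rule eq_matI, auto simp: mat_adjoint_def mat_of_rows_def)

lemma mat_adjoint_carrier[simp]: "(A::complex mat) \<in> carrier_mat m n \<Longrightarrow> mat_adjoint A \<in> carrier_mat n m"
  by (auto simp: mat_adjoint_eq_mat)

lemma dim_mat_adjoint[simp]:
  "dim_row (mat_adjoint (A::complex mat)) = dim_col A" "dim_col (mat_adjoint (A::complex mat)) = dim_row A"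
  by (auto simp: mat_adjoint_eq_mat)

lemma index_mat_adjoint[simp]:
  "i < dim_col A \<Longrightarrow> j < dim_row A \<Longrightarrow> mat_adjoint (A::complex mat) $$ (i,j) = cnj (A $$ (j,i))"
  by (auto simp: mat_adjoint_eq_mat)

lemma mat_adjoint_adjoint[simp]: "mat_adjoint (mat_adjoint A) = (A::complex mat)"
  by (rule eq_matI, auto)

lemma index_mult_mat_sum: "A \<in> carrier_mat m n \<Longrightarrow> B \<in> carrier_mat n p \<Longrightarrow> i < m \<Longrightarrow> j < p \<Longrightarrow>
  (A * B) $$ (i,j) = (\<Sum>l<n. A $$ (i,l) * B $$ (l,j))"
  by (auto simp: scalar_prod_def lessThan_atLeast0 intro!: sum.cong)

lemma index_mult_mat_vec_sum: "A \<in> carrier_mat m n \<Longrightarrow> v \<in> carrier_vec n \<Longrightarrow> i < m \<Longrightarrow>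
  (A *\<^sub>v v) $ i = (\<Sum>l<n. A $$ (i,l) * v $ l)"
  by (auto simp: scalar_prod_def lessThan_atLeast0 intro!: sum.cong)

lemma mat_adjoint_mult:
  assumes "(A::complex mat) \<in> carrier_mat m n" "B \<in> carrier_mat n p"
  shows "mat_adjoint (A * B) = mat_adjoint B * mat_adjoint A"
proof (rule eq_matI)
  fix i j assume "i < dim_row (mat_adjoint B * mat_adjoint A)" "j < dim_col (mat_adjoint B * mat_adjoint A)"
  hence i: "i < p" and j: "j < m" using assms by auto
  have "mat_adjoint (A * B) $$ (i,j) = cnj ((A*B) $$ (j,i))" using assms i j by auto
  also have "\<dots> = (\<Sum>l<n. cnj (A $$ (j,l)) * cnj (B $$ (l,i)))"
    using assms i j by (simp add: index_mult_mat_sum[of A m n B p] cnj_sum del: index_mult_mat)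
  also have "\<dots> = (mat_adjoint B * mat_adjoint A) $$ (i,j)"
    using assms i j by (subst index_mult_mat_sum[of _ p n _ m], auto intro!: sum.cong)
  finally show "mat_adjoint (A * B) $$ (i, j) = (mat_adjoint B * mat_adjoint A) $$ (i, j)" .
qed (use assms in auto)

lemma mat_adjoint_minus:
  assumes "(A::complex mat) \<in> carrier_mat m n" "B \<in> carrier_mat m n"
  shows "mat_adjoint (A - B) = mat_adjoint A - mat_adjoint B"
  by (rule eq_matI, use assms in auto)

lemma mat_adjoint_one[simp]: "mat_adjoint (1\<^sub>m n) = (1\<^sub>m n :: complex mat)"
  by (rule eq_matI, auto)

lemma mat_adjoint_smult_real:
  "mat_adjoint (complex_of_real r \<cdot>\<^sub>m A) = complex_of_real r \<cdot>\<^sub>m mat_adjoint (A::complex mat)"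
  by (rule eq_matI, auto)

lemma mat_adjoint_congruence:
  assumes Z: "(Z::complex mat) \<in> carrier_mat n k" and X: "X \<in> carrier_mat n n" and Xh: "mat_adjoint X = X"
  shows "mat_adjoint (mat_adjoint Z * X * Z) = mat_adjoint Z * X * Z"
proof -
  have aZ: "mat_adjoint Z \<in> carrier_mat k n" using Z by simp
  have "mat_adjoint (mat_adjoint Z * X * Z) = mat_adjoint Z * mat_adjoint (mat_adjoint Z * X)"
    by (rule mat_adjoint_mult, use Z X in auto)
  also have "mat_adjoint (mat_adjoint Z * X) = X * Z" using mat_adjoint_mult[OF aZ X] Xh by simp
  also have "mat_adjoint Z * (X * Z) = mat_adjoint Z * X * Z"
    by (rule assoc_mult_mat[symmetric, OF aZ X Z])
  finally show ?thesis .
qed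

definition cinner :: "complex vec \<Rightarrow> complex vec \<Rightarrow> complex" where
  "cinner x y = (\<Sum>i<dim_vec x. cnj (x $ i) * y $ i)"

definition cnorm2 :: "complex vec \<Rightarrow> real" where
  "cnorm2 x = (\<Sum>i<dim_vec x. (cmod (x $ i))\<^sup>2)"

definition qform :: "complex mat \<Rightarrow> complex vec \<Rightarrow> complex" where
  "qform M v = cinner v (M *\<^sub>v v)"

lemma cnorm2_nonneg: "0 \<le> cnorm2 x"
  unfolding cnorm2_def by (auto intro: sum_nonneg)

lemma cinner_self: "cinner x x = complex_of_real (cnorm2 x)"
  unfolding cinner_def cnorm2_def of_real_sum
  by (rule sum.cong) (simp_all add: mult.commute[of "cnj _"] complex_norm_square[symmetric])

lemma cnorm2_eq_0D: "x \<in> carrier_vec n \<Longrightarrow> cnorm2 x = 0 \<Longrightarrow> x = 0\<^sub>v n"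
proof -
  assume x: "x \<in> carrier_vec n" and z: "cnorm2 x = 0"
  have "\<forall>i\<in>{..<n}. (cmod (x $ i))\<^sup>2 = 0"
    using z x unfolding cnorm2_def by (subst sum_nonneg_eq_0_iff[symmetric]) auto
  thus ?thesis using x by (intro eq_vecI) auto
qed

lemma cnorm2_smult_real: "cnorm2 (complex_of_real a \<cdot>\<^sub>v v) = a\<^sup>2 * cnorm2 v"
  unfolding cnorm2_def by (auto simp: sum_distrib_left norm_mult power_mult_distrib intro!: sum.cong)

lemma cnorm2_normalize:
  assumes "cnorm2 v \<noteq> 0"
  shows "cnorm2 (complex_of_real (1 / sqrt (cnorm2 v)) \<cdot>\<^sub>v v) = 1"
  unfolding cnorm2_smult_real using assms cnorm2_nonneg[of v] by (simp add: power_divide)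

lemma cvec_norm_eq_sqrt_cnorm2: "cvec_norm v = sqrt (cnorm2 v)"
  unfolding cvec_norm_def cnorm2_def by simp

lemma cnj_cinner: "x \<in> carrier_vec n \<Longrightarrow> y \<in> carrier_vec n \<Longrightarrow> cnj (cinner x y) = cinner y x"
  unfolding cinner_def by (auto simp: cnj_sum mult.commute)

lemma cinner_diff_right: "x \<in> carrier_vec n \<Longrightarrow> y \<in> carrier_vec n \<Longrightarrow> z \<in> carrier_vec n \<Longrightarrow>
  cinner x (y - z) = cinner x y - cinner x z"
  unfolding cinner_def by (auto simp: sum_subtractf right_diff_distrib)

lemma cinner_diff_left: "x \<in> carrier_vec n \<Longrightarrow> y \<in> carrier_vec n \<Longrightarrow> z \<in> carrier_vec n \<Longrightarrow>
  cinner (y - z) x = cinner y x - cinner z x"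
  unfolding cinner_def by (auto simp: sum_subtractf left_diff_distrib)

lemma cinner_smult_right: "x \<in> carrier_vec n \<Longrightarrow> y \<in> carrier_vec n \<Longrightarrow> cinner x (c \<cdot>\<^sub>v y) = c * cinner x y"
  unfolding cinner_def by (auto simp: sum_distrib_left intro!: sum.cong)

lemma cinner_smult_left: "x \<in> carrier_vec n \<Longrightarrow> y \<in> carrier_vec n \<Longrightarrow> cinner (c \<cdot>\<^sub>v y) x = cnj c * cinner y x"
  unfolding cinner_def by (auto simp: sum_distrib_left intro!: sum.cong)

lemma sum_lessThan_add: "(\<Sum>i<a+(b::nat). f i) = (\<Sum>i<a. f i) + (\<Sum>i<b. f (a+i))"
  by (induction b) (auto simp: add.assoc)

lemma cinner_append:
  assumes "a \<in> carrier_vec n" "b \<in> carrier_vec n" "d \<in> carrier_vec m" "e \<in> carrier_vec m"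
  shows "cinner (a @\<^sub>v d) (b @\<^sub>v e) = cinner a b + cinner d e"
  unfolding cinner_def using assms by (simp add: sum_lessThan_add)

lemma cscalar_prod_eq_cinner: "x \<in> carrier_vec n \<Longrightarrow> y \<in> carrier_vec n \<Longrightarrow> x \<bullet>c y = cinner y x"
  unfolding cinner_def scalar_prod_def by (auto simp: lessThan_atLeast0 mult.commute intro!: sum.cong)

lemma cinner_mat_adjoint:
  assumes L: "L \<in> carrier_mat m n" and w: "w \<in> carrier_vec m" and v: "v \<in> carrier_vec n"
  shows "cinner v (mat_adjoint L *\<^sub>v w) = cinner (L *\<^sub>v v) w"
proof -
  have "cinner v (mat_adjoint L *\<^sub>v w) = (\<Sum>i<n. cnj (v $ i) * (\<Sum>l<m. cnj (L $$ (l,i)) * w $ l))"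
    unfolding cinner_def using assms index_mult_mat_vec_sum[OF mat_adjoint_carrier[OF L] w]
    by (auto simp del: index_mult_mat_vec intro!: sum.cong)
  also have "\<dots> = (\<Sum>i<n. \<Sum>l<m. cnj (v $ i) * cnj (L $$ (l,i)) * w $ l)"
    by (simp add: sum_distrib_left mult.assoc)
  also have "\<dots> = (\<Sum>l<m. \<Sum>i<n. cnj (v $ i) * cnj (L $$ (l,i)) * w $ l)"
    by (rule sum.swap)
  also have "\<dots> = (\<Sum>l<m. cnj (\<Sum>i<n. L $$ (l,i) * v $ i) * w $ l)"
    unfolding cnj_sum sum_distrib_right by (rule sum.cong, simp, rule sum.cong, simp_all)
  also have "\<dots> = cinner (L *\<^sub>v v) w"
    unfolding cinner_def using assms index_mult_mat_vec_sum[OF L v]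
    by (auto simp del: index_mult_mat_vec simp: cnj_sum intro!: sum.cong)
  finally show ?thesis .
qed

lemma qform_congruence:
  assumes L: "L \<in> carrier_mat m n" and M: "M \<in> carrier_mat m m" and v: "v \<in> carrier_vec n"
  shows "qform (mat_adjoint L * M * L) v = qform M (L *\<^sub>v v)"
proof -
  have "(mat_adjoint L * M * L) *\<^sub>v v = (mat_adjoint L * M) *\<^sub>v (L *\<^sub>v v)"
    using assms by (intro assoc_mult_mat_vec) auto
  also have "\<dots> = mat_adjoint L *\<^sub>v (M *\<^sub>v (L *\<^sub>v v))"
    using assms by (intro assoc_mult_mat_vec) auto
  finally show ?thesis unfolding qform_def using assms by (simp add: cinner_mat_adjoint)
qed

lemma qform_hermitian_real:
  assumes "M \<in> carrier_mat n n" "mat_adjoint M = M" "v \<in> carrier_vec n"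
  shows "qform M v = complex_of_real (Re (qform M v))"
proof -
  have "cnj (qform M v) = cinner (M *\<^sub>v v) v" unfolding qform_def using assms by (intro cnj_cinner[of _ n]) auto
  also have "\<dots> = qform M v" unfolding qform_def using cinner_mat_adjoint[of M n n v v] assms by simp
  finally have "cnj (qform M v) = qform M v" .
  hence "Im (qform M v) = 0" by (metis cnj.simps(2) neg_equal_zero)
  thus ?thesis by (simp add: complex_eq_iff)
qed

lemma qform_diff: "A \<in> carrier_mat n n \<Longrightarrow> B \<in> carrier_mat n n \<Longrightarrow> v \<in> carrier_vec n \<Longrightarrow>
  qform (A - B) v = qform A v - qform B v"
  unfolding qform_def by (simp add: minus_mult_distrib_mat_vec cinner_diff_right[of _ n])

lemma smult_mat_mult_vec: "A \<in> carrier_mat m n \<Longrightarrow> v \<in> carrier_vec n \<Longrightarrow> (c \<cdot>\<^sub>m A) *\<^sub>v v = c \<cdot>\<^sub>v (A *\<^sub>v v)"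
  by (rule eq_vecI, auto simp: scalar_prod_def sum_distrib_left intro!: sum.cong simp: mult.assoc)

lemma qform_smult: "A \<in> carrier_mat n n \<Longrightarrow> v \<in> carrier_vec n \<Longrightarrow> qform (c \<cdot>\<^sub>m A) v = c * qform A v"
  unfolding qform_def by (simp add: cinner_smult_right[of _ n] smult_mat_mult_vec)

lemma qform_one: "v \<in> carrier_vec n \<Longrightarrow> qform (1\<^sub>m n) v = complex_of_real (cnorm2 v)"
  unfolding qform_def by (simp add: cinner_self)

lemma qform_eq_0_if_kernel: "v \<in> carrier_vec n \<Longrightarrow> M *\<^sub>v v = 0\<^sub>v n \<Longrightarrow> qform M v = 0"
  unfolding qform_def cinner_def by simp

lemma qform_zero_vec: "M \<in> carrier_mat n n \<Longrightarrow> qform M (0\<^sub>v n) = 0"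
  unfolding qform_def cinner_def by simp

lemma cnorm2_mult_mat_vec:
  assumes "L \<in> carrier_mat m n" "v \<in> carrier_vec n"
  shows "complex_of_real (cnorm2 (L *\<^sub>v v)) = qform (mat_adjoint L * L) v"
  using qform_congruence[of L m n "1\<^sub>m m" v] assms by (simp add: qform_one)

lemma cmat_pos_iff_qform: "cmat_pos n Y \<longleftrightarrow> Y \<in> cmat_sa n \<and> (\<forall>v\<in>carrier_vec n. 0 \<le> Re (qform Y v))"
  unfolding cmat_pos_def qform_def cinner_def by auto

section \<open>Direct sums of complex matrices\<close>

lemma dim_direct_sum[simp]:
  "dim_row (direct_sum P Q) = dim_row P + dim_row Q" "dim_col (direct_sum P Q) = dim_col P + dim_col Q"
  unfolding direct_sum_def by auto

lemma direct_sum_four_block: "P \<in> carrier_mat n n' \<Longrightarrow> Q \<in> carrier_mat m m' \<Longrightarrow>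
  direct_sum P Q = four_block_mat P (0\<^sub>m n m') (0\<^sub>m m n') Q"
  unfolding direct_sum_def by auto

lemma direct_sum_carrier[simp]:
  "P \<in> carrier_mat n n \<Longrightarrow> Q \<in> carrier_mat m m \<Longrightarrow> direct_sum P Q \<in> carrier_mat (n+m) (n+m)"
  unfolding direct_sum_def by auto

lemma direct_sum_mult_vec_append:
  assumes "P \<in> carrier_mat n n" "Q \<in> carrier_mat m m" "a \<in> carrier_vec n" "d \<in> carrier_vec m"
  shows "direct_sum P Q *\<^sub>v (a @\<^sub>v d) = (P *\<^sub>v a) @\<^sub>v (Q *\<^sub>v d)"
  unfolding direct_sum_def using mult_mat_vec_split[OF assms] assms by auto

lemma qform_direct_sum:
  assumes "P \<in> carrier_mat n n" "Q \<in> carrier_mat m m" "a \<in> carrier_vec n" "d \<in> carrier_vec m"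
  shows "qform (direct_sum P Q) (a @\<^sub>v d) = qform P a + qform Q d"
  unfolding qform_def direct_sum_mult_vec_append[OF assms] using assms by (intro cinner_append) auto

lemma mat_adjoint_direct_sum:
  assumes "(P :: complex mat) \<in> carrier_mat n n" "Q \<in> carrier_mat m m"
  shows "mat_adjoint (direct_sum P Q) = direct_sum (mat_adjoint P) (mat_adjoint Q)"
  unfolding direct_sum_def by (rule eq_matI, use assms in auto)

lemma direct_sum_mult:
  assumes "(P :: complex mat) \<in> carrier_mat n n" "Q \<in> carrier_mat m m"
    "P' \<in> carrier_mat n n" "Q' \<in> carrier_mat m m"
  shows "direct_sum P Q * direct_sum P' Q' = direct_sum (P * P') (Q * Q')"
proof -
  have "direct_sum P Q * direct_sum P' Q' = four_block_mat (P * P' + 0\<^sub>m n m * 0\<^sub>m m n) (P * 0\<^sub>m n m + 0\<^sub>m n m * Q')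
    (0\<^sub>m m n * P' + Q * 0\<^sub>m m n) (0\<^sub>m m n * 0\<^sub>m n m + Q * Q')"
    unfolding direct_sum_four_block[OF assms(1,2)] direct_sum_four_block[OF assms(3,4)]
    using assms by (intro mult_four_block_mat) auto
  also have "\<dots> = direct_sum (P * P') (Q * Q')" using assms by (subst direct_sum_four_block[of _ n n _ m m]) auto
  finally show ?thesis .
qed

lemma direct_sum_one: "direct_sum (1\<^sub>m n) (1\<^sub>m m) = (1\<^sub>m (n+m) :: complex mat)"
  unfolding direct_sum_def by simp

lemma hermitian_direct_sum_iff:
  assumes "(P :: complex mat) \<in> carrier_mat n n" "Q \<in> carrier_mat m m"
  shows "direct_sum P Q \<in> cmat_sa (n+m) \<longleftrightarrow> P \<in> cmat_sa n \<and> Q \<in> cmat_sa m"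
proof
  assume "direct_sum P Q \<in> cmat_sa (n+m)"
  hence e: "direct_sum (mat_adjoint P) (mat_adjoint Q) = direct_sum P Q"
    using mat_adjoint_direct_sum[OF assms] unfolding cmat_sa_def by auto
  have "mat_adjoint P = P"
  proof (rule eq_matI)
    fix i j assume "i < dim_row P" "j < dim_col P"
    thus "mat_adjoint P $$ (i,j) = P $$ (i,j)"
      using arg_cong[OF e, of "\<lambda>M. M $$ (i,j)"] assms unfolding direct_sum_def by auto
  qed (use assms in auto)
  moreover have "mat_adjoint Q = Q"
  proof (rule eq_matI)
    fix i j assume "i < dim_row Q" "j < dim_col Q"
    thus "mat_adjoint Q $$ (i,j) = Q $$ (i,j)"
      using arg_cong[OF e, of "\<lambda>M. M $$ (n+i,n+j)"] assms unfolding direct_sum_def by auto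
  qed (use assms in auto)
  ultimately show "P \<in> cmat_sa n \<and> Q \<in> cmat_sa m" using assms unfolding cmat_sa_def by auto
next
  assume "P \<in> cmat_sa n \<and> Q \<in> cmat_sa m"
  thus "direct_sum P Q \<in> cmat_sa (n+m)" unfolding cmat_sa_def using mat_adjoint_direct_sum[OF assms] assms by auto
qed

lemma append_vec_eq_zero_iff:
  assumes "a \<in> carrier_vec n" "d \<in> carrier_vec m"
  shows "a @\<^sub>v d = 0\<^sub>v (n+m) \<longleftrightarrow> a = 0\<^sub>v n \<and> (d :: 'a::zero vec) = 0\<^sub>v m"
proof
  assume h: "a @\<^sub>v d = 0\<^sub>v (n+m)"
  have "a = 0\<^sub>v n"
  proof (rule eq_vecI)
    fix i assume "i < dim_vec (0\<^sub>v n :: 'a vec)"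
    thus "a $ i = 0\<^sub>v n $ i" using arg_cong[OF h, of "\<lambda>v. v $ i"] assms by simp
  qed (use assms in auto)
  moreover have "d = 0\<^sub>v m"
  proof (rule eq_vecI)
    fix i assume "i < dim_vec (0\<^sub>v m :: 'a vec)"
    thus "d $ i = 0\<^sub>v m $ i" using arg_cong[OF h, of "\<lambda>v. v $ (n+i)"] assms by simp
  qed (use assms in auto)
  ultimately show "a = 0\<^sub>v n \<and> d = 0\<^sub>v m" by simp
qed (auto intro!: eq_vecI)

section \<open>Spectral theorem for Hermitian matrices\<close>

definition unitary_mat :: "nat \<Rightarrow> complex mat \<Rightarrow> bool" where
  "unitary_mat n U \<longleftrightarrow> U \<in> carrier_mat n n \<and> mat_adjoint U * U = 1\<^sub>m n \<and> U * mat_adjoint U = 1\<^sub>m n"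

definition rdiag_mat :: "nat \<Rightarrow> (nat \<Rightarrow> real) \<Rightarrow> complex mat" where
  "rdiag_mat n d = mat n n (\<lambda>(i,j). if i = j then complex_of_real (d i) else 0)"

lemma rdiag_mat_carrier[simp]: "rdiag_mat n d \<in> carrier_mat n n"
  unfolding rdiag_mat_def by auto

lemma mat_adjoint_rdiag_mat[simp]: "mat_adjoint (rdiag_mat n d) = rdiag_mat n d"
  unfolding rdiag_mat_def by (rule eq_matI, auto)

lemma rdiag_mat_cong: "(\<And>i. i < n \<Longrightarrow> a i = b i) \<Longrightarrow> rdiag_mat n a = rdiag_mat n b"
  unfolding rdiag_mat_def by (rule eq_matI, auto)

lemma rdiag_mat_mult: "rdiag_mat n a * rdiag_mat n b = rdiag_mat n (\<lambda>i. a i * b i)"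
proof (rule eq_matI)
  fix i j assume "i < dim_row (rdiag_mat n (\<lambda>i. a i * b i))" "j < dim_col (rdiag_mat n (\<lambda>i. a i * b i))"
  hence i: "i < n" and j: "j < n" by (auto simp: rdiag_mat_def)
  have "(rdiag_mat n a * rdiag_mat n b) $$ (i,j) = (\<Sum>l<n. rdiag_mat n a $$ (i,l) * rdiag_mat n b $$ (l,j))"
    using i j by (intro index_mult_mat_sum) auto
  also have "\<dots> = (\<Sum>l\<in>{i}. rdiag_mat n a $$ (i,l) * rdiag_mat n b $$ (l,j))"
    by (rule sum.mono_neutral_right, use i j in \<open>auto simp: rdiag_mat_def\<close>)
  finally show "(rdiag_mat n a * rdiag_mat n b) $$ (i,j) = rdiag_mat n (\<lambda>i. a i * b i) $$ (i,j)"
    using i j by (auto simp: rdiag_mat_def)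
qed (auto simp: rdiag_mat_def)

lemma qform_rdiag_mat:
  assumes "w \<in> carrier_vec n"
  shows "qform (rdiag_mat n d) w = complex_of_real (\<Sum>i<n. d i * (cmod (w $ i))\<^sup>2)"
proof -
  have "qform (rdiag_mat n d) w = (\<Sum>i<n. cnj (w $ i) * (\<Sum>l<n. rdiag_mat n d $$ (i,l) * w $ l))"
    unfolding qform_def cinner_def using assms by (auto simp: index_mult_mat_vec_sum[of _ n n] intro!: sum.cong)
  also have "\<dots> = (\<Sum>i<n. cnj (w $ i) * (\<Sum>l\<in>{i}. rdiag_mat n d $$ (i,l) * w $ l))"
    by (rule sum.cong[OF refl], rule arg_cong[where f = "\<lambda>x. _ * x"],
        rule sum.mono_neutral_right, auto simp: rdiag_mat_def)
  also have "\<dots> = (\<Sum>i<n. complex_of_real (d i * (cmod (w $ i))\<^sup>2))"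
    by (rule sum.cong[OF refl])
      (simp add: rdiag_mat_def of_real_mult complex_norm_square[symmetric] mult.left_commute mult.commute)
  finally show ?thesis by simp
qed

lemma unitary_matI:
  assumes "U \<in> carrier_mat n n" "mat_adjoint U * U = 1\<^sub>m n"
  shows "unitary_mat n U"
  using assms mat_mult_left_right_inverse[of "mat_adjoint U" n U] unfolding unitary_mat_def by auto

lemma mat_adjoint_mult_congruence:
  assumes A: "(A::complex mat) \<in> carrier_mat n n" and B: "B \<in> carrier_mat n n" and H: "H \<in> carrier_mat n n"
  shows "mat_adjoint (A * B) * H * (A * B) = mat_adjoint B * (mat_adjoint A * H * A) * B"
proof -
  have aA: "mat_adjoint A \<in> carrier_mat n n" and aB: "mat_adjoint B \<in> carrier_mat n n" using A B by auto
  have "mat_adjoint (A * B) * H * (A * B) = mat_adjoint B * (mat_adjoint A * H) * (A * B)"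
    using mat_adjoint_mult[OF A B] aA aB H by (simp add: assoc_mult_mat)
  also have "\<dots> = mat_adjoint B * (mat_adjoint A * H) * A * B"
    by (rule assoc_mult_mat[symmetric], use aA aB H A B in auto)
  also have "mat_adjoint B * (mat_adjoint A * H) * A = mat_adjoint B * (mat_adjoint A * H * A)"
    by (rule assoc_mult_mat, use aA aB H A in auto)
  finally show ?thesis .
qed

lemma unitary_mat_mult:
  assumes "unitary_mat n U" "unitary_mat n V"
  shows "unitary_mat n (U * V)"
proof (rule unitary_matI)
  have U: "U \<in> carrier_mat n n" and V: "V \<in> carrier_mat n n" using assms unfolding unitary_mat_def by auto
  show "U * V \<in> carrier_mat n n" using U V by auto
  have "mat_adjoint (U * V) * 1\<^sub>m n * (U * V) = mat_adjoint V * (mat_adjoint U * 1\<^sub>m n * U) * V"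
    using U V by (intro mat_adjoint_mult_congruence) auto
  also have "\<dots> = 1\<^sub>m n" using assms U V unfolding unitary_mat_def by simp
  finally show "mat_adjoint (U * V) * (U * V) = 1\<^sub>m n" using U V by simp
qed

lemma unitary_mat_direct_sum:
  assumes "unitary_mat n U" "unitary_mat m V"
  shows "unitary_mat (n+m) (direct_sum U V)"
proof (rule unitary_matI)
  have U: "U \<in> carrier_mat n n" and V: "V \<in> carrier_mat m m" using assms unfolding unitary_mat_def by auto
  show "direct_sum U V \<in> carrier_mat (n+m) (n+m)" using U V by simp
  have "mat_adjoint (direct_sum U V) * direct_sum U V = direct_sum (mat_adjoint U * U) (mat_adjoint V * V)"
    unfolding mat_adjoint_direct_sum[OF U V] by (rule direct_sum_mult, use U V in auto)
  thus "mat_adjoint (direct_sum U V) * direct_sum U V = 1\<^sub>m (n+m)"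
    using assms direct_sum_one unfolding unitary_mat_def by simp
qed

lemma index_mat_adjoint_mult_mult:
  assumes W: "W \<in> carrier_mat m k" and M: "M \<in> carrier_mat m m" and i: "i < k" and j: "j < k"
  shows "(mat_adjoint W * M * W) $$ (i,j) = cinner (col W i) (M *\<^sub>v col W j)"
proof -
  have "mat_adjoint W * M * W = mat_adjoint W * (M * W)" using W M by (intro assoc_mult_mat) auto
  hence "(mat_adjoint W * M * W) $$ (i,j) = (\<Sum>l<m. cnj (W $$ (l,i)) * (M * W) $$ (l,j))"
    using W M i j by (simp add: index_mult_mat_sum[of _ k m _ k] del: index_mult_mat)
  also have "\<dots> = cinner (col W i) (M *\<^sub>v col W j)"
    unfolding cinner_def using W M i j by (auto intro!: sum.cong)
  finally show ?thesis .
qed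

lemma unitary_mat_cinner_col:
  assumes "unitary_mat n U" "i < n" "j < n"
  shows "cinner (col U i) (col U j) = (if i = j then 1 else 0)"
proof -
  have U: "U \<in> carrier_mat n n" "mat_adjoint U * U = 1\<^sub>m n" using assms(1) unfolding unitary_mat_def by auto
  hence "mat_adjoint U * 1\<^sub>m n * U = 1\<^sub>m n" by simp
  thus ?thesis using index_mat_adjoint_mult_mult[of U n n "1\<^sub>m n" i j] U assms(2,3) by simp
qed

lemma orthonormal_basis_extension:
  assumes u: "u \<in> carrier_vec n" and un: "cnorm2 u = 1"
  shows "\<exists>us. length us = n \<and> set us \<subseteq> carrier_vec n \<and>
     (\<forall>i<n. \<forall>j<n. cinner (us!i) (us!j) = (if i = j then 1 else 0)) \<and> us ! 0 = u"
proof -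
  have u0: "u \<noteq> 0\<^sub>v n" using un u unfolding cnorm2_def by auto
  interpret cof_vec_space n "TYPE(complex)" .
  define b where "b = basis_completion u"
  from basis_completion[OF u u0, folded b_def]
  have dist_b: "distinct b" and indep: "\<not> lin_dep (set b)" and bc: "set b \<subseteq> carrier_vec n"
    and hdb: "hd b = u" and len_b: "length b = n" by auto
  have n: "n > 0" using u0 u by (cases n) auto
  from hdb len_b n obtain vs where bv: "b = u # vs" by (cases b, auto)
  define ws where "ws = gram_schmidt n b"
  from gram_schmidt_result[OF bc dist_b indep refl, folded ws_def]
  have ws: "set ws \<subseteq> carrier_vec n" "corthogonal ws" "length ws = n"
    by (auto simp: len_b)
  from gram_schmidt_hd[OF u, of vs, folded bv] have "hd ws = u" unfolding ws_def .
  hence ws0: "ws ! 0 = u" using ws(3) n by (metis hd_conv_nth length_greater_0_conv)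
  have wsc: "\<And>i. i < n \<Longrightarrow> ws ! i \<in> carrier_vec n" using ws by auto
  have wsip: "\<And>i j. i < n \<Longrightarrow> j < n \<Longrightarrow> cinner (ws!i) (ws!j) = 0 \<longleftrightarrow> i \<noteq> j"
    using corthogonalD[OF ws(2)] ws(3) wsc cscalar_prod_eq_cinner by metis
  have pos: "\<And>i. i < n \<Longrightarrow> cnorm2 (ws ! i) \<noteq> 0"
    using wsip by (metis cinner_self of_real_0)
  define us where "us = map (\<lambda>w. complex_of_real (1 / sqrt (cnorm2 w)) \<cdot>\<^sub>v w) ws"
  have "cinner (us!i) (us!j) = (if i = j then 1 else 0)" if i: "i < n" and j: "j < n" for i j
  proof (cases "i = j")
    case True
    thus ?thesis unfolding us_def using i ws(3) cnorm2_normalize[OF pos[OF i]] by (simp add: cinner_self)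
  next
    case False
    thus ?thesis unfolding us_def using i j ws(3) wsip[OF i j] wsc[OF i] wsc[OF j]
      by (simp add: cinner_smult_left[of _ n] cinner_smult_right[of _ n])
  qed
  moreover have "us ! 0 = u" unfolding us_def using n ws(3) ws0 un by simp
  moreover have "set us \<subseteq> carrier_vec n" "length us = n" unfolding us_def using ws by auto
  ultimately show ?thesis by blast
qed

lemma unitary_mat_with_first_col:
  assumes "u \<in> carrier_vec n" "cnorm2 u = 1"
  shows "\<exists>W. unitary_mat n W \<and> col W 0 = u"
proof -
  obtain us where us: "length us = n" "set us \<subseteq> carrier_vec n"
     "\<forall>i<n. \<forall>j<n. cinner (us!i) (us!j) = (if i = j then 1 else 0)" "us ! 0 = u"
    using orthonormal_basis_extension[OF assms] by blast
  define W where "W = mat_of_cols n us"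
  have W: "W \<in> carrier_mat n n" unfolding W_def using us by auto
  have colW: "\<And>j. j < n \<Longrightarrow> col W j = us ! j" unfolding W_def using us
    by (metis col_mat_of_cols nth_mem subset_code(1))
  have "mat_adjoint W * W = 1\<^sub>m n"
  proof (rule eq_matI)
    fix i j assume "i < dim_row (1\<^sub>m n)" "j < dim_col (1\<^sub>m n)"
    hence i: "i < n" and j: "j < n" by auto
    have "(mat_adjoint W * W) $$ (i,j) = (mat_adjoint W * 1\<^sub>m n * W) $$ (i,j)" using W by simp
    also have "\<dots> = cinner (us!i) (us!j)"
      using index_mat_adjoint_mult_mult[OF W _ i j, of "1\<^sub>m n"] colW i j W us(1,2) by (simp add: subset_iff)
    finally show "(mat_adjoint W * W) $$ (i,j) = 1\<^sub>m n $$ (i,j)" using us(3) i j by simp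
  qed (use W in auto)
  moreover have "col W 0 = u" using colW us assms by (cases n) (auto simp: cnorm2_def)
  ultimately show ?thesis using unitary_matI[OF W] by blast
qed

lemma unit_eigenvector_exists:
  assumes "H \<in> carrier_mat n n" "0 < n"
  shows "\<exists>e u. u \<in> carrier_vec n \<and> cnorm2 u = 1 \<and> H *\<^sub>v u = e \<cdot>\<^sub>v u"
proof -
  obtain e where "e \<in> spectrum H" using spectrum_non_empty[OF assms] by auto
  hence "eigenvector H (find_eigenvector H e) e"
    using find_eigenvector[OF assms(1)] unfolding spectrum_def by auto
  then obtain v where v: "v \<in> carrier_vec n" "v \<noteq> 0\<^sub>v n" "H *\<^sub>v v = e \<cdot>\<^sub>v v"
    unfolding eigenvector_def using assms by auto
  have nv: "cnorm2 v \<noteq> 0" using cnorm2_eq_0D[OF v(1)] v(2) by auto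
  define u where "u = complex_of_real (1 / sqrt (cnorm2 v)) \<cdot>\<^sub>v v"
  have "H *\<^sub>v u = e \<cdot>\<^sub>v u" unfolding u_def using assms v
    by (simp add: mult_mat_vec smult_smult_assoc mult.commute)
  moreover have "u \<in> carrier_vec n" "cnorm2 u = 1" unfolding u_def using v(1) cnorm2_normalize[OF nv] by auto
  ultimately show ?thesis by blast
qed

lemma hermitian_first_col_block:
  assumes G: "G \<in> carrier_mat (Suc n) (Suc n)" and Gh: "mat_adjoint G = G"
    and G0: "\<And>i. i < Suc n \<Longrightarrow> G $$ (i,0) = (if i = 0 then e else 0)"
  obtains H where "H \<in> carrier_mat n n" "mat_adjoint H = H"
    "G = direct_sum (mat 1 1 (\<lambda>_. complex_of_real (Re e))) H"
proof -
  define H where "H = mat n n (\<lambda>(i,j). G $$ (Suc i, Suc j))"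
  have Gsym: "\<And>i j. i < Suc n \<Longrightarrow> j < Suc n \<Longrightarrow> G $$ (i,j) = cnj (G $$ (j,i))"
    by (metis G Gh index_mat_adjoint carrier_matD(1) carrier_matD(2))
  have "cnj e = e" using Gsym[of 0 0] G0[of 0] by simp
  hence "Im e = 0" by (metis cnj.simps(2) neg_equal_zero)
  hence e: "complex_of_real (Re e) = e" by (simp add: complex_eq_iff)
  have G0': "\<And>j. j < Suc n \<Longrightarrow> G $$ (0,j) = (if j = 0 then e else 0)"
    using Gsym[of 0] G0 \<open>cnj e = e\<close> by auto
  have "mat_adjoint H = H" unfolding H_def
  proof (rule eq_matI)
    fix i j assume "i < dim_row (mat n n (\<lambda>(i,j). G $$ (Suc i, Suc j)))"
      "j < dim_col (mat n n (\<lambda>(i,j). G $$ (Suc i, Suc j)))"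
    thus "mat_adjoint (mat n n (\<lambda>(i,j). G $$ (Suc i, Suc j))) $$ (i,j) = mat n n (\<lambda>(i,j). G $$ (Suc i, Suc j)) $$ (i,j)"
      using Gsym[of "Suc i" "Suc j"] by simp
  qed auto
  moreover have "G = direct_sum (mat 1 1 (\<lambda>_. complex_of_real (Re e))) H"
  proof (rule eq_matI)
    fix i j assume "i < dim_row (direct_sum (mat 1 1 (\<lambda>_. complex_of_real (Re e))) H)"
      "j < dim_col (direct_sum (mat 1 1 (\<lambda>_. complex_of_real (Re e))) H)"
    hence i: "i < Suc n" and j: "j < Suc n" unfolding H_def by auto
    show "G $$ (i,j) = direct_sum (mat 1 1 (\<lambda>_. complex_of_real (Re e))) H $$ (i,j)"
    proof (cases "i = 0 \<or> j = 0")
      case True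
      thus ?thesis using i j G0[OF i] G0'[OF j] e unfolding direct_sum_def H_def by auto
    next
      case False
      then obtain i' j' where "i = Suc i'" "j = Suc j'" by (metis not0_implies_Suc)
      thus ?thesis using i j unfolding direct_sum_def H_def by auto
    qed
  qed (use G in \<open>auto simp: H_def\<close>)
  moreover have "H \<in> carrier_mat n n" unfolding H_def by simp
  ultimately show thesis using that[of H] by blast
qed

lemma hermitian_deflation:
  assumes H: "H \<in> carrier_mat (Suc n) (Suc n)" and Hh: "mat_adjoint H = H"
  obtains W e H' where "unitary_mat (Suc n) W" "H' \<in> carrier_mat n n" "mat_adjoint H' = H'"
    "mat_adjoint W * H * W = direct_sum (mat 1 1 (\<lambda>_. complex_of_real e)) H'"
proof -
  obtain e u where u: "u \<in> carrier_vec (Suc n)" "cnorm2 u = 1" and Hu: "H *\<^sub>v u = e \<cdot>\<^sub>v u"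
    using unit_eigenvector_exists[OF H] by blast
  obtain W where W: "unitary_mat (Suc n) W" and W0: "col W 0 = u"
    using unitary_mat_with_first_col[OF u] by blast
  have Wc: "W \<in> carrier_mat (Suc n) (Suc n)" using W unfolding unitary_mat_def by auto
  define G where "G = mat_adjoint W * H * W"
  have G: "G \<in> carrier_mat (Suc n) (Suc n)" unfolding G_def using Wc H by auto
  have Gh: "mat_adjoint G = G" unfolding G_def by (rule mat_adjoint_congruence[OF Wc H Hh])
  have "G $$ (i,0) = (if i = 0 then e else 0)" if i: "i < Suc n" for i
  proof -
    have "G $$ (i,0) = cinner (col W i) (e \<cdot>\<^sub>v col W 0)"
      unfolding G_def using index_mat_adjoint_mult_mult[OF Wc H i, of 0] W0 Hu by simp
    also have "\<dots> = e * cinner (col W i) (col W 0)"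
      using Wc i by (intro cinner_smult_right[of _ "Suc n"]) (auto simp: col_def)
    finally show ?thesis using unitary_mat_cinner_col[OF W i, of 0] by simp
  qed
  then obtain H' where "H' \<in> carrier_mat n n" "mat_adjoint H' = H'"
    "G = direct_sum (mat 1 1 (\<lambda>_. complex_of_real (Re e))) H'"
    using hermitian_first_col_block[OF G Gh] by blast
  thus thesis using that[OF W] unfolding G_def by blast
qed

lemma direct_sum_congruence:
  assumes "(U :: complex mat) \<in> carrier_mat n n" "A \<in> carrier_mat n n" "V \<in> carrier_mat m m" "B \<in> carrier_mat m m"
  shows "mat_adjoint (direct_sum U V) * direct_sum A B * direct_sum U V
    = direct_sum (mat_adjoint U * A * U) (mat_adjoint V * B * V)"
proof -
  have "mat_adjoint (direct_sum U V) * direct_sum A B = direct_sum (mat_adjoint U * A) (mat_adjoint V * B)"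
    using assms direct_sum_mult[of "mat_adjoint U" n "mat_adjoint V" m A B] by (simp add: mat_adjoint_direct_sum)
  moreover have "mat_adjoint U * A \<in> carrier_mat n n" "mat_adjoint V * B \<in> carrier_mat m m"
    using assms by (meson mat_adjoint_carrier mult_carrier_mat)+
  ultimately show ?thesis using assms direct_sum_mult[of "mat_adjoint U * A" n "mat_adjoint V * B" m U V] by simp
qed

theorem hermitian_diagonalization:
  assumes "H \<in> carrier_mat n n" "mat_adjoint H = H"
  shows "\<exists>U d. unitary_mat n U \<and> mat_adjoint U * H * U = rdiag_mat n d"
  using assms
proof (induction n arbitrary: H)
  case 0
  show ?case by (rule exI[of _ "1\<^sub>m 0"], rule exI[of _ "\<lambda>_. 0"])
      (auto simp: unitary_mat_def rdiag_mat_def intro!: eq_matI)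
next
  case (Suc n)
  obtain W e H' where W: "unitary_mat (Suc n) W" and H': "H' \<in> carrier_mat n n" "mat_adjoint H' = H'"
    and WHW: "mat_adjoint W * H * W = direct_sum (mat 1 1 (\<lambda>_. complex_of_real e)) H'"
    using hermitian_deflation[OF Suc.prems] by blast
  obtain U' d' where U': "unitary_mat n U'" and d': "mat_adjoint U' * H' * U' = rdiag_mat n d'"
    using Suc.IH[OF H'] by blast
  have U'c: "U' \<in> carrier_mat n n" using U' unfolding unitary_mat_def by auto
  define V where "V = direct_sum (1\<^sub>m 1) U'"
  have V: "unitary_mat (Suc n) V"
    unfolding V_def using unitary_mat_direct_sum[OF _ U', of 1 "1\<^sub>m 1"] by (simp add: unitary_mat_def)
  have "mat_adjoint (W * V) * H * (W * V) = mat_adjoint V * (mat_adjoint W * H * W) * V"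
    using W V Suc.prems unfolding unitary_mat_def by (intro mat_adjoint_mult_congruence) auto
  also have "\<dots> = direct_sum (mat 1 1 (\<lambda>_. complex_of_real e)) (rdiag_mat n d')"
    unfolding WHW V_def d'[symmetric] using direct_sum_congruence[OF one_carrier_mat _ U'c H'(1)]
    by (simp add: left_mult_one_mat right_mult_one_mat)
  also have "\<dots> = rdiag_mat (Suc n) (\<lambda>i. if i = 0 then e else d' (i - 1))"
    by (rule eq_matI) (auto simp: direct_sum_def rdiag_mat_def)
  finally show ?case using unitary_mat_mult[OF W V] by blast
qed

corollary hermitian_spectral_decomposition:
  assumes "H \<in> carrier_mat n n" "mat_adjoint H = H"
  shows "\<exists>U d. unitary_mat n U \<and> mat_adjoint U * H * U = rdiag_mat n d \<and> H = U * rdiag_mat n d * mat_adjoint U"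
proof -
  obtain U d where U: "unitary_mat n U" and D: "mat_adjoint U * H * U = rdiag_mat n d"
    using hermitian_diagonalization[OF assms] by blast
  have "U * rdiag_mat n d * mat_adjoint U = mat_adjoint (mat_adjoint U) * (mat_adjoint U * H * U) * mat_adjoint U"
    unfolding D by simp
  also have "\<dots> = mat_adjoint (U * mat_adjoint U) * H * (U * mat_adjoint U)"
    using U assms unfolding unitary_mat_def by (intro mat_adjoint_mult_congruence[symmetric]) auto
  also have "\<dots> = H" using U assms unfolding unitary_mat_def by simp
  finally show ?thesis using U D by metis
qed

section \<open>Positive square roots and inverses\<close>

lemma cmat_posD:
  assumes "cmat_pos n P"
  shows "P \<in> carrier_mat n n" "mat_adjoint P = P" "\<And>v. v \<in> carrier_vec n \<Longrightarrow> 0 \<le> Re (qform P v)"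
    "\<And>v. v \<in> carrier_vec n \<Longrightarrow> qform P v = complex_of_real (Re (qform P v))"
  using assms qform_hermitian_real[of P n] unfolding cmat_pos_iff_qform cmat_sa_def by auto

lemma cmat_pos_congruence:
  assumes "cmat_pos n P" "Z \<in> carrier_mat n k"
  shows "cmat_pos k (mat_adjoint Z * P * Z)"
  using assms cmat_posD[OF assms(1)] mat_adjoint_congruence[of Z n k P]
  unfolding cmat_pos_iff_qform cmat_sa_def by (auto simp: qform_congruence)

lemma cmat_pos_rdiag_mat:
  assumes "\<And>i. i < n \<Longrightarrow> 0 \<le> d i"
  shows "cmat_pos n (rdiag_mat n d)"
  unfolding cmat_pos_iff_qform cmat_sa_def
  by (auto simp: qform_rdiag_mat assms intro!: sum_nonneg mult_nonneg_nonneg)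

lemma cmat_pos_sqrt_exists:
  assumes P: "cmat_pos n P"
  shows "\<exists>S. cmat_pos n S \<and> S * S = P"
proof -
  note Pc = cmat_posD(1,2)[OF P]
  obtain U d where U: "unitary_mat n U" and D: "mat_adjoint U * P * U = rdiag_mat n d"
    and PD: "P = U * rdiag_mat n d * mat_adjoint U"
    using hermitian_spectral_decomposition[OF Pc] by blast
  have Uc: "U \<in> carrier_mat n n" and aU: "mat_adjoint U \<in> carrier_mat n n" and UU: "mat_adjoint U * U = 1\<^sub>m n"
    using U unfolding unitary_mat_def by auto
  have d: "0 \<le> d i" if i: "i < n" for i
  proof -
    have "complex_of_real (d i) = cinner (col U i) (P *\<^sub>v col U i)"
      using index_mat_adjoint_mult_mult[OF Uc Pc(1) i i] i unfolding D by (simp add: rdiag_mat_def)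
    thus ?thesis using cmat_posD(3)[OF P, of "col U i"] Uc unfolding qform_def by (metis Re_complex_of_real col_dim carrier_matD(1) carrier_vecI)
  qed
  define Q where "Q = rdiag_mat n (\<lambda>i. sqrt (d i))"
  define S where "S = U * Q * mat_adjoint U"
  have "cmat_pos n S"
    using cmat_pos_congruence[OF cmat_pos_rdiag_mat aU, of "\<lambda>i. sqrt (d i)"] d
    unfolding S_def Q_def by simp
  moreover have "S * S = U * Q * (mat_adjoint U * U) * Q * mat_adjoint U"
    unfolding S_def Q_def using Uc aU by (simp add: assoc_mult_mat[of _ n n _ n _ n] mult_carrier_mat[of _ n n _ n])
  hence "S * S = U * (Q * Q) * mat_adjoint U"
    unfolding UU Q_def using Uc aU
    by (simp add: assoc_mult_mat[of _ n n _ n _ n] mult_carrier_mat[of _ n n _ n]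
        left_mult_one_mat[OF mult_carrier_mat[OF rdiag_mat_carrier aU]])
  moreover have "Q * Q = rdiag_mat n d" unfolding Q_def rdiag_mat_mult by (rule rdiag_mat_cong, use d in auto)
  ultimately show ?thesis using PD by auto
qed

lemma unitary_col_eigenvector:
  assumes U: "unitary_mat n U" and H: "H = U * rdiag_mat n d * mat_adjoint U" and i: "i < n"
  shows "H *\<^sub>v col U i = complex_of_real (d i) \<cdot>\<^sub>v col U i" "cnorm2 (col U i) = 1"
proof -
  have Uc: "U \<in> carrier_mat n n" and aU: "mat_adjoint U \<in> carrier_mat n n" and UU: "mat_adjoint U * U = 1\<^sub>m n"
    using U unfolding unitary_mat_def by auto
  have HU: "H * U = U * rdiag_mat n d"
    unfolding H using Uc aU
    by (simp add: assoc_mult_mat[of _ n n _ n _ n] mult_carrier_mat[of _ n n _ n] UU right_mult_one_mat[OF rdiag_mat_carrier])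
  show "H *\<^sub>v col U i = complex_of_real (d i) \<cdot>\<^sub>v col U i"
  proof (rule eq_vecI)
    fix k assume "k < dim_vec (complex_of_real (d i) \<cdot>\<^sub>v col U i)"
    hence k: "k < n" using Uc by auto
    have "(H *\<^sub>v col U i) $ k = (H * U) $$ (k,i)" using H Uc k i by simp
    also have "\<dots> = (\<Sum>l<n. U $$ (k,l) * rdiag_mat n d $$ (l,i))"
      unfolding HU using Uc k i by (intro index_mult_mat_sum) auto
    also have "\<dots> = (\<Sum>l\<in>{i}. U $$ (k,l) * rdiag_mat n d $$ (l,i))"
      by (rule sum.mono_neutral_right, use i in \<open>auto simp: rdiag_mat_def\<close>)
    finally show "(H *\<^sub>v col U i) $ k = (complex_of_real (d i) \<cdot>\<^sub>v col U i) $ k"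
      using Uc k i by (simp add: rdiag_mat_def)
  qed (use H Uc in auto)
  show "cnorm2 (col U i) = 1"
    using unitary_mat_cinner_col[OF U i i] cinner_self[of "col U i"] by simp
qed

text \<open>With D = S - T one has S D + D T = S^2 - T^2 = 0. At a unit eigenvector v of D with
  eigenvalue r this gives r (\<langle>v,Sv\<rangle> + \<langle>v,Tv\<rangle>) = 0; if r \<noteq> 0 both forms vanish by positivity,
  and then r = \<langle>v,Dv\<rangle> = 0.\<close>
lemma cmat_pos_sq_eq_eigenvalue_zero:
  assumes S: "cmat_pos n S" and T: "cmat_pos n T" and ST: "S * S = T * T"
    and v: "v \<in> carrier_vec n" and nv: "cnorm2 v = 1" and Dv: "(S - T) *\<^sub>v v = complex_of_real r \<cdot>\<^sub>v v"
  shows "r = 0"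
proof (rule ccontr)
  assume la: "r \<noteq> 0"
  note Sc = cmat_posD(1,2)[OF S] and Tc = cmat_posD(1,2)[OF T]
  define D where "D = S - T"
  have Dc: "D \<in> carrier_mat n n" unfolding D_def using Sc Tc by auto
  have Dv': "D *\<^sub>v v = complex_of_real r \<cdot>\<^sub>v v" unfolding D_def by (rule Dv)
  have Dh: "mat_adjoint D = D" unfolding D_def using Sc Tc by (simp add: mat_adjoint_minus)
  have SD_DT: "S * D + D * T = 0\<^sub>m n n"
    by (rule eq_matI) (use Sc Tc arg_cong[OF ST, of "\<lambda>M. M $$ _"] in
        \<open>auto simp: D_def mult_minus_distrib_mat[of _ n n] minus_mult_distrib_mat[of _ n n]\<close>)
  have "qform (S * D) v = complex_of_real r * qform S v"
    unfolding qform_def using Sc Dc v Dv' by (simp add: mult_mat_vec[OF Sc(1) v] cinner_smult_right[of _ n])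
  moreover have "qform (D * T) v = complex_of_real r * qform T v"
  proof -
    have "qform (D * T) v = cinner v (mat_adjoint D *\<^sub>v (T *\<^sub>v v))" unfolding qform_def Dh using Dc Tc v by simp
    also have "\<dots> = cinner (D *\<^sub>v v) (T *\<^sub>v v)" by (rule cinner_mat_adjoint[OF Dc _ v], use Tc v in auto)
    finally show ?thesis unfolding Dv' qform_def using v Tc by (simp add: cinner_smult_left[of _ n])
  qed
  moreover have "qform (S * D + D * T) v = 0" unfolding SD_DT qform_def cinner_def using v by simp
  ultimately have "complex_of_real r * (qform S v + qform T v) = 0"
    using Sc Dc Tc v unfolding qform_def
    by (simp add: add_mult_distrib_mat_vec[of _ n n] cinner_def sum.distrib distrib_left ring_distribs)
  hence "qform S v + qform T v = 0" using la by simp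
  hence "qform S v = 0" "qform T v = 0"
    using cmat_posD(3,4)[OF S v] cmat_posD(3,4)[OF T v]
    by (metis add_nonneg_eq_0_iff of_real_0 of_real_add Re_complex_of_real)+
  hence "qform D v = 0" unfolding D_def using Sc Tc v by (simp add: qform_diff)
  moreover have "qform D v = complex_of_real r" unfolding qform_def Dv' using v
    by (simp add: cinner_smult_right[of _ n] cinner_self nv)
  ultimately show False using la by simp
qed

lemma cmat_pos_sqrt_unique:
  assumes S: "cmat_pos n S" and T: "cmat_pos n T" and ST: "S * S = T * T"
  shows "S = T"
proof -
  note Sc = cmat_posD(1,2)[OF S] and Tc = cmat_posD(1,2)[OF T]
  have Dc: "S - T \<in> carrier_mat n n" using Sc Tc by auto
  have Dh: "mat_adjoint (S - T) = S - T" using Sc Tc by (simp add: mat_adjoint_minus)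
  obtain U d where U: "unitary_mat n U" and DU: "S - T = U * rdiag_mat n d * mat_adjoint U"
    using hermitian_spectral_decomposition[OF Dc Dh] by blast
  have "d i = 0" if i: "i < n" for i
    using cmat_pos_sq_eq_eigenvalue_zero[OF S T ST _ unitary_col_eigenvector(2,1)[OF U DU i]] U i
    unfolding unitary_mat_def by auto
  hence "rdiag_mat n d = 0\<^sub>m n n" unfolding rdiag_mat_def by (intro eq_matI) auto
  hence D0: "S - T = 0\<^sub>m n n" unfolding DU using U unfolding unitary_mat_def
    by (simp add: right_mult_zero_mat[of U n n n] left_mult_zero_mat[of "mat_adjoint U" n n n])
  show ?thesis
  proof (rule eq_matI)
    fix i j assume "i < dim_row T" "j < dim_col T"
    thus "S $$ (i,j) = T $$ (i,j)" using arg_cong[OF D0, of "\<lambda>M. M $$ (i,j)"] Sc Tc by simp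
  qed (use Sc Tc in auto)
qed

lemma cmat_sqrt:
  assumes "cmat_pos n P"
  shows "cmat_pos n (cmat_sqrt n P)" "cmat_sqrt n P * cmat_sqrt n P = P"
proof -
  have "\<exists>!S. cmat_pos n S \<and> S * S = P"
    using cmat_pos_sqrt_exists[OF assms] cmat_pos_sqrt_unique by metis
  from theI'[OF this] show "cmat_pos n (cmat_sqrt n P)" "cmat_sqrt n P * cmat_sqrt n P = P"
    unfolding cmat_sqrt_def by auto
qed

lemma invertible_mat_inverse:
  assumes "invertible_mat A" "A \<in> carrier_mat n n"
  obtains B where "B \<in> carrier_mat n n" "A * B = 1\<^sub>m n" "B * A = 1\<^sub>m n"
proof -
  obtain B where AB: "A * B = 1\<^sub>m (dim_row A)" and BA: "B * A = 1\<^sub>m (dim_row B)"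
    using assms(1) unfolding invertible_mat_def inverts_mat_def by auto
  have "B \<in> carrier_mat n n" using arg_cong[OF AB, of dim_col] arg_cong[OF BA, of dim_col] assms(2) by auto
  thus ?thesis using AB BA assms(2) that by auto
qed

lemma invertible_mat_iff_kernel_trivial:
  assumes A: "(A :: complex mat) \<in> carrier_mat n n"
  shows "invertible_mat A \<longleftrightarrow> (\<forall>v\<in>carrier_vec n. A *\<^sub>v v = 0\<^sub>v n \<longrightarrow> v = 0\<^sub>v n)"
proof
  assume "invertible_mat A"
  then obtain B where B: "B \<in> carrier_mat n n" "B * A = 1\<^sub>m n" using invertible_mat_inverse A by metis
  show "\<forall>v\<in>carrier_vec n. A *\<^sub>v v = 0\<^sub>v n \<longrightarrow> v = 0\<^sub>v n"
  proof (intro ballI impI)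
    fix v :: "complex vec" assume v: "v \<in> carrier_vec n" and Av: "A *\<^sub>v v = 0\<^sub>v n"
    have "v = (B * A) *\<^sub>v v" using B v by simp
    also have "\<dots> = B *\<^sub>v (A *\<^sub>v v)" using A B v by (intro assoc_mult_mat_vec) auto
    finally have "v = B *\<^sub>v (A *\<^sub>v v)" .
    moreover have "B *\<^sub>v 0\<^sub>v n = 0\<^sub>v n" using B by (intro eq_vecI) (auto simp: scalar_prod_def)
    ultimately show "v = 0\<^sub>v n" unfolding Av by simp
  qed
next
  assume "\<forall>v\<in>carrier_vec n. A *\<^sub>v v = 0\<^sub>v n \<longrightarrow> v = 0\<^sub>v n"
  hence "det A \<noteq> 0" using det_0_iff_vec_prod_zero_field[OF A] by auto
  from det_non_zero_imp_unit[OF A this, of "()"]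
  obtain B where "B \<in> carrier_mat n n" "B * A = 1\<^sub>m n" "A * B = 1\<^sub>m n"
    unfolding Units_def ring_mat_def by auto
  thus "invertible_mat A" unfolding invertible_mat_def inverts_mat_def square_mat.simps using A by auto
qed

lemma cmat_inv:
  assumes "invertible_mat A" "A \<in> carrier_mat n n"
  shows "cmat_inv n A \<in> carrier_mat n n" "A * cmat_inv n A = 1\<^sub>m n" "cmat_inv n A * A = 1\<^sub>m n"
proof -
  have "\<exists>!Z. Z \<in> carrier_mat n n \<and> A * Z = 1\<^sub>m n \<and> Z * A = 1\<^sub>m n"
  proof (rule ex_ex1I)
    show "\<exists>Z. Z \<in> carrier_mat n n \<and> A * Z = 1\<^sub>m n \<and> Z * A = 1\<^sub>m n"
      using invertible_mat_inverse[OF assms] by metis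
  next
    fix Z Y assume "Z \<in> carrier_mat n n \<and> A * Z = 1\<^sub>m n \<and> Z * A = 1\<^sub>m n"
      and "Y \<in> carrier_mat n n \<and> A * Y = 1\<^sub>m n \<and> Y * A = 1\<^sub>m n"
    hence Z: "Z \<in> carrier_mat n n" "Z * A = 1\<^sub>m n" and Y: "Y \<in> carrier_mat n n" "A * Y = 1\<^sub>m n" by auto
    have "Z = Z * (A * Y)" unfolding Y(2) using Z(1) by simp
    also have "\<dots> = (Z * A) * Y" using Z Y assms by (intro assoc_mult_mat[symmetric]) auto
    finally show "Z = Y" unfolding Z(2) using Y(1) by simp
  qed
  from theI'[OF this] show "cmat_inv n A \<in> carrier_mat n n" "A * cmat_inv n A = 1\<^sub>m n" "cmat_inv n A * A = 1\<^sub>m n"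
    unfolding cmat_inv_def by auto
qed

lemma cmat_inv_unique:
  assumes "A \<in> carrier_mat n n" "B \<in> carrier_mat n n" "A * B = 1\<^sub>m n" "B * A = 1\<^sub>m n"
  shows "cmat_inv n A = B"
proof -
  have "invertible_mat A" unfolding invertible_mat_def inverts_mat_def using assms by auto
  note inv = cmat_inv[OF this assms(1)]
  have "cmat_inv n A = cmat_inv n A * (A * B)" using assms inv by simp
  also have "\<dots> = (cmat_inv n A * A) * B" using assms inv by (intro assoc_mult_mat[symmetric]) auto
  finally show ?thesis using assms inv by simp
qed

lemma cmat_pd_inv:
  assumes Y: "cmat_pd n Y"
  shows "cmat_pd n (cmat_inv n Y)"
proof -
  have Yc: "Y \<in> carrier_mat n n" and Yh: "mat_adjoint Y = Y" and Yi: "invertible_mat Y"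
    using Y unfolding cmat_pd_def cmat_pos_def cmat_sa_def by auto
  define Z where "Z = cmat_inv n Y"
  have Z: "Z \<in> carrier_mat n n" "Y * Z = 1\<^sub>m n" "Z * Y = 1\<^sub>m n" using cmat_inv[OF Yi Yc] unfolding Z_def by auto
  have "Y * mat_adjoint Z = 1\<^sub>m n" using mat_adjoint_mult[OF Z(1) Yc] Yh Z(3) by simp
  moreover have "mat_adjoint Z * Y = 1\<^sub>m n" using mat_adjoint_mult[OF Yc Z(1)] Yh Z(2) by simp
  ultimately have "cmat_inv n Y = mat_adjoint Z" using Z by (intro cmat_inv_unique[OF Yc]) auto
  hence Zh: "mat_adjoint Z = Z" unfolding Z_def by simp
  have "0 \<le> Re (qform Z v)" if v: "v \<in> carrier_vec n" for v
  proof -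
    have "qform Z v = qform (mat_adjoint Z * Y * Z) v"
      using Z Yc Zh by (simp add: assoc_mult_mat[of Z n n Y n Z n])
    thus ?thesis using v Z Yc cmat_posD(3)[of n Y "Z *\<^sub>v v"] Y unfolding cmat_pd_def
      by (simp add: qform_congruence)
  qed
  moreover have "invertible_mat Z" unfolding invertible_mat_def inverts_mat_def using Z Yc by auto
  ultimately show ?thesis unfolding Z_def[symmetric] cmat_pd_def cmat_pos_iff_qform cmat_sa_def using Z Zh by auto
qed

lemma cmat_invsqrt:
  assumes Y: "cmat_pd n Y"
  defines "R \<equiv> cmat_invsqrt n Y"
  shows "R \<in> carrier_mat n n" "mat_adjoint R = R" "R * R = cmat_inv n Y" "R * Y * R = 1\<^sub>m n"
proof -
  have Yc: "Y \<in> carrier_mat n n" and Yi: "invertible_mat Y" using Y unfolding cmat_pd_def cmat_pos_def cmat_sa_def by auto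
  note inv = cmat_inv[OF Yi Yc]
  have "cmat_pos n (cmat_inv n Y)" using cmat_pd_inv[OF Y] unfolding cmat_pd_def by auto
  note sq = cmat_sqrt[OF this, folded cmat_invsqrt_def R_def]
  show Rc: "R \<in> carrier_mat n n" "mat_adjoint R = R" "R * R = cmat_inv n Y" using cmat_posD(1,2)[OF sq(1)] sq(2) by auto
  have RRY: "R * (R * Y) = 1\<^sub>m n" using assoc_mult_mat[of R n n R n Y n] Rc Yc inv by simp
  thus "R * Y * R = 1\<^sub>m n" using mat_mult_left_right_inverse[OF Rc(1) _ RRY] Rc Yc by auto
qed

lemma cmat_pd_if_coercive:
  assumes Q: "Q \<in> cmat_sa n" and e: "0 < e" and coercive: "\<And>v. v \<in> carrier_vec n \<Longrightarrow> e * cnorm2 v \<le> Re (qform Q v)"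
  shows "cmat_pd n Q"
proof -
  have Qc: "Q \<in> carrier_mat n n" using Q unfolding cmat_sa_def by auto
  have "0 \<le> Re (qform Q v)" if "v \<in> carrier_vec n" for v
    using coercive[OF that] e cnorm2_nonneg[of v] by (smt (verit) mult_nonneg_nonneg)
  moreover have "v = 0\<^sub>v n" if v: "v \<in> carrier_vec n" and Qv: "Q *\<^sub>v v = 0\<^sub>v n" for v
  proof -
    have "e * cnorm2 v \<le> 0" using coercive[OF v] qform_eq_0_if_kernel[OF v Qv] by simp
    hence "cnorm2 v = 0" using e cnorm2_nonneg[of v] by (simp add: mult_le_0_iff)
    thus ?thesis using cnorm2_eq_0D[OF v] by simp
  qed
  ultimately show ?thesis
    using Q invertible_mat_iff_kernel_trivial[OF Qc] unfolding cmat_pd_def cmat_pos_iff_qform by auto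
qed

lemma cmat_pos_direct_sum_iff:
  assumes "(P :: complex mat) \<in> carrier_mat n n" "Q \<in> carrier_mat m m"
  shows "cmat_pos (n+m) (direct_sum P Q) \<longleftrightarrow> cmat_pos n P \<and> cmat_pos m Q"
proof
  assume h: "cmat_pos (n+m) (direct_sum P Q)"
  have q: "\<And>v. v \<in> carrier_vec (n+m) \<Longrightarrow> 0 \<le> Re (qform (direct_sum P Q) v)"
    using h unfolding cmat_pos_iff_qform by auto
  have "0 \<le> Re (qform P a)" if a: "a \<in> carrier_vec n" for a
    using q[of "a @\<^sub>v 0\<^sub>v m"] qform_direct_sum[OF assms a, of "0\<^sub>v m"] qform_zero_vec[OF assms(2)] a assms
    by auto
  moreover have "0 \<le> Re (qform Q d)" if d: "d \<in> carrier_vec m" for d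
    using q[of "0\<^sub>v n @\<^sub>v d"] qform_direct_sum[OF assms _ d, of "0\<^sub>v n"] qform_zero_vec[OF assms(1)] d assms
    by auto
  ultimately show "cmat_pos n P \<and> cmat_pos m Q"
    using h hermitian_direct_sum_iff[OF assms] unfolding cmat_pos_iff_qform by auto
next
  assume h: "cmat_pos n P \<and> cmat_pos m Q"
  have "0 \<le> Re (qform (direct_sum P Q) v)" if v: "v \<in> carrier_vec (n+m)" for v
  proof -
    have "v = vec_first v n @\<^sub>v vec_last v m" using v by simp
    hence "qform (direct_sum P Q) v = qform P (vec_first v n) + qform Q (vec_last v m)"
      using qform_direct_sum[OF assms vec_first_carrier vec_last_carrier] by metis
    thus ?thesis using h unfolding cmat_pos_iff_qform by auto
  qed
  thus "cmat_pos (n+m) (direct_sum P Q)" using h hermitian_direct_sum_iff[OF assms] unfolding cmat_pos_iff_qform by auto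
qed

lemma invertible_direct_sum_iff:
  assumes P: "(P :: complex mat) \<in> carrier_mat n n" and Q: "Q \<in> carrier_mat m m"
  shows "invertible_mat (direct_sum P Q) \<longleftrightarrow> invertible_mat P \<and> invertible_mat Q"
proof -
  have D: "direct_sum P Q \<in> carrier_mat (n+m) (n+m)" using P Q by simp
  have split: "direct_sum P Q *\<^sub>v (a @\<^sub>v d) = 0\<^sub>v (n+m) \<longleftrightarrow> P *\<^sub>v a = 0\<^sub>v n \<and> Q *\<^sub>v d = 0\<^sub>v m"
    if "a \<in> carrier_vec n" "d \<in> carrier_vec m" for a d
    using direct_sum_mult_vec_append[OF P Q that] append_vec_eq_zero_iff[of "P *\<^sub>v a" n "Q *\<^sub>v d" m] P Q that by simp
  have "(\<forall>v\<in>carrier_vec (n+m). direct_sum P Q *\<^sub>v v = 0\<^sub>v (n+m) \<longrightarrow> v = 0\<^sub>v (n+m)) \<longleftrightarrow>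
    (\<forall>a\<in>carrier_vec n. P *\<^sub>v a = 0\<^sub>v n \<longrightarrow> a = 0\<^sub>v n) \<and> (\<forall>d\<in>carrier_vec m. Q *\<^sub>v d = 0\<^sub>v m \<longrightarrow> d = 0\<^sub>v m)"
  proof safe
    fix a assume K: "\<forall>v\<in>carrier_vec (n+m). direct_sum P Q *\<^sub>v v = 0\<^sub>v (n+m) \<longrightarrow> v = 0\<^sub>v (n+m)"
      and a: "a \<in> carrier_vec n" and Pa: "P *\<^sub>v a = 0\<^sub>v n"
    have "Q *\<^sub>v 0\<^sub>v m = 0\<^sub>v m" using Q by (auto intro!: eq_vecI simp: scalar_prod_def)
    hence "direct_sum P Q *\<^sub>v (a @\<^sub>v 0\<^sub>v m) = 0\<^sub>v (n+m)" using split[OF a, of "0\<^sub>v m"] Pa by simp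
    hence "a @\<^sub>v 0\<^sub>v m = 0\<^sub>v (n+m)" using K a by auto
    thus "a = 0\<^sub>v n" using append_vec_eq_zero_iff[OF a, of "0\<^sub>v m" m] by simp
  next
    fix d assume K: "\<forall>v\<in>carrier_vec (n+m). direct_sum P Q *\<^sub>v v = 0\<^sub>v (n+m) \<longrightarrow> v = 0\<^sub>v (n+m)"
      and d: "d \<in> carrier_vec m" and Qd: "Q *\<^sub>v d = 0\<^sub>v m"
    have "P *\<^sub>v 0\<^sub>v n = 0\<^sub>v n" using P by (auto intro!: eq_vecI simp: scalar_prod_def)
    hence "direct_sum P Q *\<^sub>v (0\<^sub>v n @\<^sub>v d) = 0\<^sub>v (n+m)" using split[OF _ d, of "0\<^sub>v n"] Qd by simp
    hence "0\<^sub>v n @\<^sub>v d = 0\<^sub>v (n+m)" using K d by auto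
    thus "d = 0\<^sub>v m" using append_vec_eq_zero_iff[OF _ d, of "0\<^sub>v n" n] by simp
  next
    fix v assume KP: "\<forall>a\<in>carrier_vec n. P *\<^sub>v a = 0\<^sub>v n \<longrightarrow> a = 0\<^sub>v n"
      and KQ: "\<forall>d\<in>carrier_vec m. Q *\<^sub>v d = 0\<^sub>v m \<longrightarrow> d = 0\<^sub>v m"
      and v: "v \<in> carrier_vec (n+m)" and Dv: "direct_sum P Q *\<^sub>v v = 0\<^sub>v (n+m)"
    have vs: "v = vec_first v n @\<^sub>v vec_last v m" using v by simp
    hence "P *\<^sub>v vec_first v n = 0\<^sub>v n" "Q *\<^sub>v vec_last v m = 0\<^sub>v m"
      using split[OF vec_first_carrier vec_last_carrier] Dv by metis+
    hence "vec_first v n = 0\<^sub>v n" "vec_last v m = 0\<^sub>v m" using KP KQ by auto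
    thus "v = 0\<^sub>v (n+m)" using vs append_vec_eq_zero_iff[OF vec_first_carrier vec_last_carrier] by metis
  qed
  thus ?thesis using invertible_mat_iff_kernel_trivial[OF P] invertible_mat_iff_kernel_trivial[OF Q]
      invertible_mat_iff_kernel_trivial[OF D] by simp
qed

lemma cmat_pd_direct_sum_iff:
  assumes "(P :: complex mat) \<in> carrier_mat n n" "Q \<in> carrier_mat m m"
  shows "cmat_pd (n+m) (direct_sum P Q) \<longleftrightarrow> cmat_pd n P \<and> cmat_pd m Q"
  using cmat_pos_direct_sum_iff[OF assms] invertible_direct_sum_iff[OF assms] unfolding cmat_pd_def by auto

lemma cmat_sqrt_direct_sum:
  assumes "cmat_pos n P" "cmat_pos m Q"
  shows "cmat_sqrt (n+m) (direct_sum P Q) = direct_sum (cmat_sqrt n P) (cmat_sqrt m Q)"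
proof -
  note sP = cmat_sqrt[OF assms(1)] and sQ = cmat_sqrt[OF assms(2)]
  note sPc = cmat_posD(1)[OF sP(1)] and sQc = cmat_posD(1)[OF sQ(1)]
  have "cmat_pos (n+m) (direct_sum P Q)"
    using cmat_pos_direct_sum_iff[OF cmat_posD(1)[OF assms(1)] cmat_posD(1)[OF assms(2)]] assms by simp
  note sD = cmat_sqrt[OF this]
  have "cmat_pos (n+m) (direct_sum (cmat_sqrt n P) (cmat_sqrt m Q))"
    using cmat_pos_direct_sum_iff[OF sPc sQc] sP sQ by simp
  moreover have "direct_sum (cmat_sqrt n P) (cmat_sqrt m Q) * direct_sum (cmat_sqrt n P) (cmat_sqrt m Q) = direct_sum P Q"
    using direct_sum_mult[OF sPc sQc sPc sQc] sP sQ by simp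
  ultimately show ?thesis using cmat_pos_sqrt_unique[OF sD(1)] sD(2) by metis
qed

lemma cmat_invsqrt_direct_sum:
  assumes P: "cmat_pd n P" and Q: "cmat_pd m Q"
  shows "cmat_invsqrt (n+m) (direct_sum P Q) = direct_sum (cmat_invsqrt n P) (cmat_invsqrt m Q)"
proof -
  have Pc: "P \<in> carrier_mat n n" and Qc: "Q \<in> carrier_mat m m" and iP: "invertible_mat P" and iQ: "invertible_mat Q"
    using assms unfolding cmat_pd_def cmat_pos_def cmat_sa_def by auto
  note P' = cmat_inv[OF iP Pc] and Q' = cmat_inv[OF iQ Qc]
  have "cmat_inv (n+m) (direct_sum P Q) = direct_sum (cmat_inv n P) (cmat_inv m Q)"
    using direct_sum_mult[OF Pc Qc P'(1) Q'(1)] direct_sum_mult[OF P'(1) Q'(1) Pc Qc] P' Q' direct_sum_one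
    by (intro cmat_inv_unique) (auto simp: Pc Qc)
  moreover have "cmat_pos n (cmat_inv n P)" "cmat_pos m (cmat_inv m Q)"
    using cmat_pd_inv[OF P] cmat_pd_inv[OF Q] unfolding cmat_pd_def by auto
  ultimately show ?thesis unfolding cmat_invsqrt_def by (simp add: cmat_sqrt_direct_sum)
qed

section \<open>Operator norm\<close>

lemma cmod_index_le_sqrt_cnorm2:
  assumes "v \<in> carrier_vec n" "i < n"
  shows "cmod (v $ i) \<le> sqrt (cnorm2 v)"
proof -
  have "(cmod (v $ i))\<^sup>2 \<le> cnorm2 v" unfolding cnorm2_def using assms by (intro member_le_sum) auto
  thus ?thesis using real_le_rsqrt by blast
qed

lemma cnorm2_mult_mat_vec_le_entry_bound:
  assumes Z: "Z \<in> carrier_mat n k" and v: "v \<in> carrier_vec k" and nv: "cnorm2 v \<le> 1"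
  shows "cnorm2 (Z *\<^sub>v v) \<le> (\<Sum>i<n. (\<Sum>j<k. cmod (Z $$ (i,j)))\<^sup>2)"
proof -
  have "cmod ((Z *\<^sub>v v) $ i) \<le> (\<Sum>j<k. cmod (Z $$ (i,j)))" if i: "i < n" for i
  proof -
    have "cmod ((Z *\<^sub>v v) $ i) \<le> (\<Sum>j<k. cmod (Z $$ (i,j) * v $ j))"
      using index_mult_mat_vec_sum[OF Z v i] norm_sum by metis
    also have "\<dots> \<le> (\<Sum>j<k. cmod (Z $$ (i,j)))"
    proof (rule sum_mono)
      fix j assume "j \<in> {..<k}"
      hence "cmod (v $ j) \<le> 1" using cmod_index_le_sqrt_cnorm2[OF v] nv by (smt (verit) lessThan_iff real_sqrt_le_1_iff)
      thus "cmod (Z $$ (i,j) * v $ j) \<le> cmod (Z $$ (i,j))" by (simp add: norm_mult mult_left_le)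
    qed
    finally show ?thesis .
  qed
  thus ?thesis unfolding cnorm2_def using Z by (auto intro!: sum_mono power_mono)
qed

lemma op_norm_set_bdd_above:
  assumes "Z \<in> carrier_mat n k"
  shows "bdd_above {cvec_norm (Z *\<^sub>v v) | v. v \<in> carrier_vec (dim_col Z) \<and> cvec_norm v \<le> 1}"
proof (rule bdd_aboveI)
  fix x assume "x \<in> {cvec_norm (Z *\<^sub>v v) | v. v \<in> carrier_vec (dim_col Z) \<and> cvec_norm v \<le> 1}"
  then obtain v where x: "x = cvec_norm (Z *\<^sub>v v)" and v: "v \<in> carrier_vec k" and nv: "cvec_norm v \<le> 1"
    using assms by auto
  have "cnorm2 v \<le> 1" using nv unfolding cvec_norm_eq_sqrt_cnorm2 using cnorm2_nonneg[of v] by simp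
  thus "x \<le> sqrt (\<Sum>i<n. (\<Sum>j<k. cmod (Z $$ (i,j)))\<^sup>2)"
    unfolding x cvec_norm_eq_sqrt_cnorm2 using cnorm2_mult_mat_vec_le_entry_bound[OF assms v] by simp
qed

lemma op_norm_upper:
  assumes "Z \<in> carrier_mat n k" "v \<in> carrier_vec k" "cnorm2 v \<le> 1"
  shows "sqrt (cnorm2 (Z *\<^sub>v v)) \<le> op_norm Z"
  unfolding op_norm_def using assms
  by (intro cSup_upper[OF _ op_norm_set_bdd_above[OF assms(1)]]) (auto simp: cvec_norm_eq_sqrt_cnorm2)

lemma op_norm_nonneg:
  assumes "Z \<in> carrier_mat n k"
  shows "0 \<le> op_norm Z"
proof -
  have "Z *\<^sub>v 0\<^sub>v k = 0\<^sub>v n" using assms by (auto intro!: eq_vecI simp: scalar_prod_def)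
  thus ?thesis using op_norm_upper[OF assms zero_carrier_vec] by (simp add: cnorm2_def)
qed

lemma cnorm2_mult_mat_vec_le_op_norm:
  assumes Z: "Z \<in> carrier_mat n k" and v: "v \<in> carrier_vec k"
  shows "cnorm2 (Z *\<^sub>v v) \<le> (op_norm Z)\<^sup>2 * cnorm2 v"
proof (cases "cnorm2 v = 0")
  case True
  hence "Z *\<^sub>v v = 0\<^sub>v n" using cnorm2_eq_0D[OF v] Z by (auto intro!: eq_vecI simp: scalar_prod_def)
  thus ?thesis using True unfolding cnorm2_def by simp
next
  case False
  hence nv: "cnorm2 v > 0" using cnorm2_nonneg[of v] by simp
  define c where "c = 1 / sqrt (cnorm2 v)"
  have "sqrt (cnorm2 (Z *\<^sub>v (complex_of_real c \<cdot>\<^sub>v v))) \<le> op_norm Z"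
    using op_norm_upper[OF Z, of "complex_of_real c \<cdot>\<^sub>v v"] cnorm2_normalize[OF False] v unfolding c_def by simp
  moreover have "cnorm2 (Z *\<^sub>v (complex_of_real c \<cdot>\<^sub>v v)) = c\<^sup>2 * cnorm2 (Z *\<^sub>v v)"
    by (simp only: mult_mat_vec[OF Z v] cnorm2_smult_real)
  moreover have "c\<^sup>2 = 1 / cnorm2 v" using nv unfolding c_def by (simp add: power_divide)
  ultimately have "cnorm2 (Z *\<^sub>v v) / cnorm2 v \<le> (op_norm Z)\<^sup>2"
    using op_norm_nonneg[OF Z] cnorm2_nonneg[of "Z *\<^sub>v v"] nv by (simp add: real_sqrt_le_iff sqrt_le_D)
  thus ?thesis using nv by (simp add: divide_le_eq)
qed

lemma op_norm_le:
  assumes Z: "Z \<in> carrier_mat n k" and c: "0 \<le> c"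
    and bound: "\<And>v. v \<in> carrier_vec k \<Longrightarrow> cnorm2 (Z *\<^sub>v v) \<le> c * cnorm2 v"
  shows "(op_norm Z)\<^sup>2 \<le> c"
proof -
  have "op_norm Z \<le> sqrt c" unfolding op_norm_def
  proof (rule cSup_least)
    show "{cvec_norm (Z *\<^sub>v v) | v. v \<in> carrier_vec (dim_col Z) \<and> cvec_norm v \<le> 1} \<noteq> {}"
      using Z by (auto intro!: exI[of _ "0\<^sub>v k"] simp: cvec_norm_def)
  next
    fix x assume "x \<in> {cvec_norm (Z *\<^sub>v v) | v. v \<in> carrier_vec (dim_col Z) \<and> cvec_norm v \<le> 1}"
    then obtain v where x: "x = cvec_norm (Z *\<^sub>v v)" and v: "v \<in> carrier_vec k" and nv: "cvec_norm v \<le> 1"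
      using Z by auto
    have "cnorm2 v \<le> 1" using nv unfolding cvec_norm_eq_sqrt_cnorm2 using cnorm2_nonneg[of v] by simp
    hence "cnorm2 (Z *\<^sub>v v) \<le> c" using bound[OF v] c by (smt (verit) mult_left_le)
    thus "x \<le> sqrt c" unfolding x cvec_norm_eq_sqrt_cnorm2 by simp
  qed
  thus ?thesis using op_norm_nonneg[OF Z] c by (metis power_mono real_sqrt_pow2)
qed

lemma op_norm_one_le: "(op_norm (1\<^sub>m n :: complex mat))\<^sup>2 \<le> 1"
  by (rule op_norm_le) auto

section \<open>The shifted matrices \<open>t I - X\<close>\<close>

lemma shiftm_carrier[simp]: "X \<in> carrier_mat n n \<Longrightarrow> shiftm n t X \<in> carrier_mat n n"
  unfolding shiftm_def by auto

lemma shiftm_sa: "X \<in> cmat_sa n \<Longrightarrow> shiftm n t X \<in> cmat_sa n"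
  unfolding cmat_sa_def shiftm_def
  by (auto simp: mat_adjoint_minus[of _ n n] mat_adjoint_smult_real)

lemma Re_qform_shiftm:
  assumes "X \<in> carrier_mat n n" "v \<in> carrier_vec n"
  shows "Re (qform (shiftm n t X) v) = t * cnorm2 v - Re (qform X v)"
  unfolding shiftm_def using assms by (simp add: qform_diff[of _ n] qform_smult[of _ n] qform_one)

lemma shiftm_direct_sum:
  assumes "(X :: complex mat) \<in> carrier_mat n n" "Y \<in> carrier_mat m m"
  shows "shiftm (n+m) t (direct_sum X Y) = direct_sum (shiftm n t X) (shiftm m t Y)"
  unfolding shiftm_def direct_sum_def by (rule eq_matI, use assms in auto)

lemma Re_qform_shiftm_congruence_ge:
  assumes X: "X \<in> carrier_mat n n" and Z: "Z \<in> carrier_mat n k" and v: "v \<in> carrier_vec k" and t: "0 \<le> t"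
  shows "Re (qform (shiftm n t X) (Z *\<^sub>v v)) + (s - (op_norm Z)\<^sup>2 * t) * cnorm2 v
    \<le> Re (qform (shiftm k s (mat_adjoint Z * X * Z)) v)"
proof -
  have Zv: "Z *\<^sub>v v \<in> carrier_vec n" using Z v by auto
  have "mat_adjoint Z * X * Z \<in> carrier_mat k k" by (meson X Z mat_adjoint_carrier mult_carrier_mat)
  hence "Re (qform (shiftm k s (mat_adjoint Z * X * Z)) v) = s * cnorm2 v - Re (qform X (Z *\<^sub>v v))"
    using Re_qform_shiftm[OF _ v] qform_congruence[OF Z X v] by simp
  moreover have "Re (qform (shiftm n t X) (Z *\<^sub>v v)) = t * cnorm2 (Z *\<^sub>v v) - Re (qform X (Z *\<^sub>v v))"
    by (rule Re_qform_shiftm[OF X Zv])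
  moreover have "t * cnorm2 (Z *\<^sub>v v) \<le> t * ((op_norm Z)\<^sup>2 * cnorm2 v)"
    using cnorm2_mult_mat_vec_le_op_norm[OF Z v] t by (rule mult_left_mono)
  ultimately show ?thesis by (simp add: algebra_simps)
qed

lemma Re_qform_bounded:
  assumes X: "X \<in> carrier_mat n n"
  shows "\<exists>c\<ge>0. \<forall>v\<in>carrier_vec n. Re (qform X v) \<le> c * cnorm2 v"
proof -
  define c where "c = (\<Sum>i<n. \<Sum>j<n. cmod (X $$ (i,j)))"
  have "Re (qform X v) \<le> c * cnorm2 v" if v: "v \<in> carrier_vec n" for v
  proof -
    have qe: "qform X v = (\<Sum>i<n. \<Sum>j<n. cnj (v $ i) * (X $$ (i,j) * v $ j))"
      unfolding qform_def cinner_def using v X index_mult_mat_vec_sum[OF X v]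
      by (auto simp: sum_distrib_left simp del: index_mult_mat_vec intro!: sum.cong)
    have "Re (qform X v) \<le> cmod (qform X v)" by (rule complex_Re_le_cmod)
    also have "\<dots> \<le> (\<Sum>i<n. \<Sum>j<n. cmod (cnj (v $ i) * (X $$ (i,j) * v $ j)))"
      unfolding qe by (rule order.trans[OF norm_sum sum_mono], rule norm_sum)
    also have "\<dots> \<le> (\<Sum>i<n. \<Sum>j<n. cmod (X $$ (i,j)) * cnorm2 v)"
    proof (intro sum_mono)
      fix i j assume "i \<in> {..<n}" "j \<in> {..<n}"
      hence "cmod (v $ i) * cmod (v $ j) \<le> sqrt (cnorm2 v) * sqrt (cnorm2 v)"
        using cmod_index_le_sqrt_cnorm2[OF v] cnorm2_nonneg[of v] by (intro mult_mono) auto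
      hence "cmod (v $ i) * cmod (v $ j) \<le> cnorm2 v" using cnorm2_nonneg[of v] by simp
      hence "cmod (X $$ (i,j)) * (cmod (v $ i) * cmod (v $ j)) \<le> cmod (X $$ (i,j)) * cnorm2 v"
        by (intro mult_left_mono) auto
      thus "cmod (cnj (v $ i) * (X $$ (i,j) * v $ j)) \<le> cmod (X $$ (i,j)) * cnorm2 v"
        by (simp add: norm_mult ac_simps)
    qed
    also have "\<dots> = c * cnorm2 v" unfolding c_def by (simp add: sum_distrib_right)
    finally show ?thesis .
  qed
  moreover have "0 \<le> c" unfolding c_def by (auto intro!: sum_nonneg)
  ultimately show ?thesis by blast
qed

lemma cnorm2_diff_smult:
  assumes "v \<in> carrier_vec n" "w \<in> carrier_vec n"
  shows "complex_of_real (cnorm2 (v - complex_of_real a \<cdot>\<^sub>v w)) =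
     complex_of_real (cnorm2 v) - complex_of_real a * cinner v w - complex_of_real a * cinner w v
     + complex_of_real (a * a * cnorm2 w)"
proof -
  have c: "complex_of_real a \<cdot>\<^sub>v w \<in> carrier_vec n" using assms by auto
  have "complex_of_real (cnorm2 (v - complex_of_real a \<cdot>\<^sub>v w)) = cinner (v - complex_of_real a \<cdot>\<^sub>v w) (v - complex_of_real a \<cdot>\<^sub>v w)"
    by (simp add: cinner_self)
  also have "\<dots> = cinner v v - cinner v (complex_of_real a \<cdot>\<^sub>v w)
      - (cinner (complex_of_real a \<cdot>\<^sub>v w) v - cinner (complex_of_real a \<cdot>\<^sub>v w) (complex_of_real a \<cdot>\<^sub>v w))"
    using assms c by (simp add: cinner_diff_left[of _ n] cinner_diff_right[of _ n])
  also have "\<dots> = complex_of_real (cnorm2 v) - complex_of_real a * cinner v w - complex_of_real a * cinner w v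
      + complex_of_real (a * a * cnorm2 w)"
    using assms by (simp add: cinner_smult_left[of _ n] cinner_smult_right[of _ n] cinner_self cnorm2_smult_real power2_eq_square)
  finally show ?thesis .
qed

text \<open>With w = P^-1 v one has \<parallel>P^-1/2 v\<parallel>^2 = \<langle>v,w\<rangle> = \<langle>w,Pw\<rangle> \<ge> \<alpha> \<parallel>w\<parallel>^2, and expanding
  0 \<le> \<parallel>v - \<alpha> w\<parallel>^2 turns this into \<langle>v,w\<rangle> \<le> \<parallel>v\<parallel>^2 / \<alpha>.\<close>
lemma op_norm_invsqrt_le:
  assumes P: "P \<in> cmat_sa n" and al: "0 < \<alpha>"
    and coercive: "\<And>v. v \<in> carrier_vec n \<Longrightarrow> \<alpha> * cnorm2 v \<le> Re (qform P v)"
  shows "(op_norm (cmat_invsqrt n P))\<^sup>2 \<le> 1 / \<alpha>"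
proof -
  have Pc: "P \<in> carrier_mat n n" and Ph: "mat_adjoint P = P" using P unfolding cmat_sa_def by auto
  have Ppd: "cmat_pd n P" by (rule cmat_pd_if_coercive[OF P al coercive])
  hence Pi: "invertible_mat P" unfolding cmat_pd_def by simp
  define R where "R = cmat_invsqrt n P"
  note pr = cmat_invsqrt[OF Ppd, folded R_def] and inv = cmat_inv[OF Pi Pc]
  show ?thesis unfolding R_def[symmetric]
  proof (rule op_norm_le[OF pr(1)])
    fix v :: "complex vec" assume v: "v \<in> carrier_vec n"
    define w where "w = cmat_inv n P *\<^sub>v v"
    have w: "w \<in> carrier_vec n" unfolding w_def using inv v by auto
    have vw: "v = P *\<^sub>v w" unfolding w_def using assoc_mult_mat_vec[OF Pc inv(1) v] inv(2) v by simp
    have vw_qform: "cinner v w = qform P w"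
      unfolding qform_def vw using cinner_mat_adjoint[OF Pc w w] Ph by simp
    have Rv: "complex_of_real (cnorm2 (R *\<^sub>v v)) = qform P w"
      using cnorm2_mult_mat_vec[OF pr(1) v] vw_qform unfolding pr(2,3) qform_def w_def by simp
    define q where "q = Re (qform P w)"
    have qr: "qform P w = complex_of_real q" unfolding q_def by (rule qform_hermitian_real[OF Pc Ph w])
    have wv: "cinner w v = complex_of_real q" using cnj_cinner[OF v w] vw_qform qr by simp
    have "complex_of_real (cnorm2 (v - complex_of_real \<alpha> \<cdot>\<^sub>v w)) = complex_of_real (cnorm2 v - 2 * \<alpha> * q + \<alpha> * \<alpha> * cnorm2 w)"
      unfolding cnorm2_diff_smult[OF v w] vw_qform qr wv by simp
    hence "0 \<le> cnorm2 v - 2 * \<alpha> * q + \<alpha> * \<alpha> * cnorm2 w"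
      using cnorm2_nonneg[of "v - complex_of_real \<alpha> \<cdot>\<^sub>v w"] by (simp only: of_real_eq_iff)
    moreover have "\<alpha> * \<alpha> * cnorm2 w \<le> \<alpha> * q"
      using mult_left_mono[OF coercive[OF w], of \<alpha>] al unfolding q_def by (simp add: mult.assoc)
    ultimately have "\<alpha> * q \<le> cnorm2 v" by linarith
    hence "q \<le> cnorm2 v / \<alpha>" using al by (simp add: field_simps)
    moreover have "cnorm2 (R *\<^sub>v v) = q" using Rv qr by simp
    ultimately show "cnorm2 (R *\<^sub>v v) \<le> 1 / \<alpha> * cnorm2 v" by simp
  qed (use al in auto)
qed

lemma invsqrt_mult_mult_identities:
  assumes Ppd: "cmat_pd n P" and M: "M \<in> carrier_mat n k"
  defines "R \<equiv> cmat_invsqrt n P"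
  shows "mat_adjoint (R * (P * M)) * R = mat_adjoint M" "R * (R * (P * M)) = M"
    "mat_adjoint (R * (P * M)) * (R * (P * M)) = mat_adjoint M * P * M"
proof -
  have Pc: "P \<in> carrier_mat n n" and Ph: "mat_adjoint P = P" and Pi: "invertible_mat P"
    using Ppd unfolding cmat_pd_def cmat_pos_def cmat_sa_def by auto
  note pr = cmat_invsqrt[OF Ppd, folded R_def] and inv = cmat_inv[OF Pi Pc]
  have aM: "mat_adjoint M \<in> carrier_mat k n" using M by simp
  have aRPM: "mat_adjoint (R * (P * M)) = mat_adjoint M * P * R"
    using mat_adjoint_mult[OF pr(1), of "P * M" k] mat_adjoint_mult[OF Pc M] pr(2) Ph Pc M by simp
  show e1: "mat_adjoint (R * (P * M)) * R = mat_adjoint M"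
  proof -
    have "mat_adjoint M * P * R * R = mat_adjoint M * P * (R * R)"
      by (rule assoc_mult_mat, use aM Pc pr in auto)
    also have "\<dots> = mat_adjoint M * (P * cmat_inv n P)" unfolding pr(3)
      by (rule assoc_mult_mat, use aM Pc inv in auto)
    finally show ?thesis unfolding aRPM inv(2) using right_mult_one_mat[OF aM] by simp
  qed
  show e2: "R * (R * (P * M)) = M"
  proof -
    have "R * (R * (P * M)) = (R * R) * (P * M)" by (rule assoc_mult_mat[symmetric], use pr Pc M in auto)
    also have "\<dots> = (cmat_inv n P * P) * M" unfolding pr(3) by (rule assoc_mult_mat[symmetric], use inv Pc M in auto)
    finally show ?thesis unfolding inv(3) using M by simp
  qed
  have "mat_adjoint (R * (P * M)) * (R * (P * M)) = mat_adjoint (R * (P * M)) * R * (P * M)"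
    by (rule assoc_mult_mat[symmetric], use pr Pc M in auto)
  also have "\<dots> = mat_adjoint M * P * M" unfolding e1 by (rule assoc_mult_mat[symmetric], use aM Pc M in auto)
  finally show "mat_adjoint (R * (P * M)) * (R * (P * M)) = mat_adjoint M * P * M" .
qed

lemma invsqrt_congruence_contraction:
  assumes Ppd: "cmat_pd n P" and Qpd: "cmat_pd k Q" and Z: "Z \<in> carrier_mat n k"
    and le: "\<And>v. v \<in> carrier_vec k \<Longrightarrow> Re (qform P (Z *\<^sub>v v)) \<le> Re (qform Q v)"
  obtains W where "W \<in> carrier_mat n k" "(op_norm W)\<^sup>2 \<le> 1"
    "mat_adjoint W * cmat_invsqrt n P = cmat_invsqrt k Q * mat_adjoint Z"
    "cmat_invsqrt n P * W = Z * cmat_invsqrt k Q"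
proof -
  have Pc: "P \<in> carrier_mat n n" and Qc: "Q \<in> carrier_mat k k"
    using Ppd Qpd unfolding cmat_pd_def cmat_pos_def cmat_sa_def by auto
  define R where "R = cmat_invsqrt n P"
  define R' where "R' = cmat_invsqrt k Q"
  note pr = cmat_invsqrt[OF Ppd, folded R_def] and pr' = cmat_invsqrt[OF Qpd, folded R'_def]
  have ZR: "Z * R' \<in> carrier_mat n k" using Z pr' by auto
  have aZR: "mat_adjoint (Z * R') = R' * mat_adjoint Z" using mat_adjoint_mult[OF Z pr'(1)] pr'(2) by simp
  define W where "W = R * (P * (Z * R'))"
  have W: "mat_adjoint W * R = mat_adjoint (Z * R')" "R * W = Z * R'"
    "mat_adjoint W * W = mat_adjoint (Z * R') * P * (Z * R')"
    using invsqrt_mult_mult_identities[OF Ppd ZR] unfolding W_def R_def by auto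
  have Wc: "W \<in> carrier_mat n k" unfolding W_def using pr Pc ZR by auto
  have "(op_norm W)\<^sup>2 \<le> 1"
  proof (rule op_norm_le[OF Wc])
    fix v :: "complex vec" assume v: "v \<in> carrier_vec k"
    have R'v: "R' *\<^sub>v v \<in> carrier_vec k" using pr' v by auto
    have "complex_of_real (cnorm2 (W *\<^sub>v v)) = qform (mat_adjoint W * W) v" by (rule cnorm2_mult_mat_vec[OF Wc v])
    also have "\<dots> = qform P ((Z * R') *\<^sub>v v)" unfolding W(3) by (rule qform_congruence[OF ZR Pc v])
    also have "(Z * R') *\<^sub>v v = Z *\<^sub>v (R' *\<^sub>v v)" by (rule assoc_mult_mat_vec[OF Z pr'(1) v])
    finally have "complex_of_real (cnorm2 (W *\<^sub>v v)) = qform P (Z *\<^sub>v (R' *\<^sub>v v))" .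
    moreover have "qform Q (R' *\<^sub>v v) = complex_of_real (cnorm2 v)"
      using qform_congruence[OF pr'(1) Qc v] pr'(2,4) qform_one[OF v] by simp
    ultimately show "cnorm2 (W *\<^sub>v v) \<le> 1 * cnorm2 v"
      using le[OF R'v] by (metis Re_complex_of_real mult_1)
  qed auto
  thus thesis using that Wc W(1,2) aZR unfolding R_def R'_def by metis
qed

section \<open>Matrices over a *-vector space\<close>

lemma index_vmat_triple:
  "p < dim_row L \<Longrightarrow> q < dim_col R \<Longrightarrow>
   vmat_triple sc L A R $$ (p,q) = (\<Sum>i<dim_row A. \<Sum>j<dim_col A. sc (L $$ (p,i) * R $$ (j,q)) (A $$ (i,j)))"
  unfolding vmat_triple_def by simp

lemma vmat_triple_carrier[simp]: "vmat_triple sc L A R \<in> carrier_mat (dim_row L) (dim_col R)"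
  unfolding vmat_triple_def by simp

lemma dim_vmat_triple[simp]:
  "dim_row (vmat_triple sc L A R) = dim_row L" "dim_col (vmat_triple sc L A R) = dim_col R"
  unfolding vmat_triple_def by simp_all

lemma vmat_sa_index:
  assumes "A \<in> vmat_sa st n" "i < n" "j < n"
  shows "A $$ (i,j) = st (A $$ (j,i))"
proof -
  have A: "A \<in> carrier_mat n n" "vmat_star st A = A" using assms unfolding vmat_sa_def by auto
  have "A $$ (i,j) = vmat_star st A $$ (i,j)" using A by simp
  thus ?thesis unfolding vmat_star_def using A assms by auto
qed

locale star_space =
  fixes sc :: "complex \<Rightarrow> 'v::ab_group_add \<Rightarrow> 'v" and st :: "'v \<Rightarrow> 'v"
  assumes cstar_space: "cstar_space sc st"
begin

lemma sc_add: "sc a (x + y) = sc a x + sc a y"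
  and sc_add_left: "sc (a + b) x = sc a x + sc b x"
  and sc_mult: "sc (a * b) x = sc a (sc b x)"
  and sc_one: "sc 1 x = x"
  and st_add: "st (x + y) = st x + st y"
  and st_sc: "st (sc a x) = sc (cnj a) (st x)"
  using cstar_space unfolding cstar_space_def by auto

lemma sc_zero: "sc a 0 = 0"
  using sc_add[of a 0 0] by simp

lemma sc_zero_left: "sc 0 x = 0"
  using sc_add_left[of 0 0 x] by simp

lemma st_zero: "st 0 = 0"
  using st_add[of 0 0] by simp

lemma sc_sum: "sc a (\<Sum>i\<in>S. f i) = (\<Sum>i\<in>S. sc a (f i))"
  by (induction S rule: infinite_finite_induct) (auto simp: sc_zero sc_add)

lemma sc_sum_left: "sc (\<Sum>i\<in>S. f i) x = (\<Sum>i\<in>S. sc (f i) x)"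
  by (induction S rule: infinite_finite_induct) (auto simp: sc_zero_left sc_add_left)

lemma st_sum: "st (\<Sum>i\<in>S. f i) = (\<Sum>i\<in>S. st (f i))"
  by (induction S rule: infinite_finite_induct) (auto simp: st_zero st_add)

lemma vmat_triple_triple:
  assumes L: "L \<in> carrier_mat p m" and L': "L' \<in> carrier_mat m n1"
    and A: "A \<in> carrier_mat n1 n2" and R': "R' \<in> carrier_mat n2 m'" and R: "R \<in> carrier_mat m' q"
  shows "vmat_triple sc L (vmat_triple sc L' A R') R = vmat_triple sc (L * L') A (R' * R)"
proof (rule eq_matI)
  fix a b assume "a < dim_row (vmat_triple sc (L * L') A (R' * R))" "b < dim_col (vmat_triple sc (L * L') A (R' * R))"
  hence a: "a < p" and b: "b < q" using L R by auto
  define c where "c = (\<lambda>x y i j. L $$ (a,x) * R $$ (y,b) * (L' $$ (x,i) * R' $$ (j,y)))"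
  have "vmat_triple sc L (vmat_triple sc L' A R') R $$ (a,b) =
    (\<Sum>x<m. \<Sum>y<m'. \<Sum>i<n1. \<Sum>j<n2. sc (c x y i j) (A $$ (i,j)))"
    using a b L R L' R' A by (simp add: index_vmat_triple sc_sum sc_mult c_def)
  also have "\<dots> = (\<Sum>i<n1. \<Sum>j<n2. \<Sum>x<m. \<Sum>y<m'. sc (c x y i j) (A $$ (i,j)))"
    by (subst sum.swap, subst (2) sum.swap, simp only: sum.swap[of _ "{..<m'}"], subst (3) sum.swap, rule refl)
  also have "\<dots> = (\<Sum>i<n1. \<Sum>j<n2. sc ((\<Sum>x<m. L $$ (a,x) * L' $$ (x,i)) * (\<Sum>y<m'. R' $$ (j,y) * R $$ (y,b))) (A $$ (i,j)))"
    by (simp add: sum_product sc_sum_left c_def ac_simps)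
  also have "\<dots> = vmat_triple sc (L * L') A (R' * R) $$ (a,b)"
  proof -
    have "vmat_triple sc (L * L') A (R' * R) $$ (a,b) = (\<Sum>i<n1. \<Sum>j<n2. sc ((L * L') $$ (a,i) * (R' * R) $$ (j,b)) (A $$ (i,j)))"
      using a b L R L' R' A by (subst index_vmat_triple) auto
    thus ?thesis by (simp add: index_mult_mat_sum[OF L L'] index_mult_mat_sum[OF R' R] a b del: index_mult_mat)
  qed
  finally show "vmat_triple sc L (vmat_triple sc L' A R') R $$ (a,b) = vmat_triple sc (L * L') A (R' * R) $$ (a,b)" .
qed (use L R in auto)

lemma vmat_triple_one:
  assumes "A \<in> carrier_mat n n"
  shows "vmat_triple sc (1\<^sub>m n) A (1\<^sub>m n) = A"
proof (rule eq_matI)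
  fix p q assume "p < dim_row A" "q < dim_col A"
  hence pq: "p < n" "q < n" using assms by auto
  have "\<And>i j. sc ((if p = i then 1 else 0) * (if j = q then 1 else 0)) (A $$ (i,j)) =
    (if q = j then (if p = i then A $$ (i,j) else 0) else 0)"
    by (auto simp: sc_one sc_zero_left)
  thus "vmat_triple sc (1\<^sub>m n) A (1\<^sub>m n) $$ (p,q) = A $$ (p,q)" using pq assms by (simp add: index_vmat_triple)
qed (use assms in auto)

lemma vmat_triple_sa:
  assumes A: "A \<in> vmat_sa st n" and R: "R \<in> carrier_mat n k"
  shows "vmat_triple sc (mat_adjoint R) A R \<in> vmat_sa st k"
proof -
  have Ac: "A \<in> carrier_mat n n" using A unfolding vmat_sa_def by auto
  define T where "T = vmat_triple sc (mat_adjoint R) A R"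
  have T: "T \<in> carrier_mat k k" unfolding T_def using R by auto
  have Te: "\<And>p q. p < k \<Longrightarrow> q < k \<Longrightarrow> T $$ (p,q) = (\<Sum>i<n. \<Sum>j<n. sc (cnj (R $$ (i,p)) * R $$ (j,q)) (A $$ (i,j)))"
    unfolding T_def using R Ac by (subst index_vmat_triple) auto
  have "vmat_star st T = T"
  proof (rule eq_matI)
    fix p q assume "p < dim_row T" "q < dim_col T" hence p: "p < k" and q: "q < k" using T by auto
    have "vmat_star st T $$ (p,q) = st (T $$ (q,p))" unfolding vmat_star_def using T p q by auto
    also have "\<dots> = (\<Sum>i<n. \<Sum>j<n. sc (cnj (R $$ (j,p)) * R $$ (i,q)) (A $$ (j,i)))"
      unfolding Te[OF q p]
      by (auto simp: st_sum st_sc vmat_sa_index[OF A, symmetric] mult.commute intro!: sum.cong)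
    also have "\<dots> = T $$ (p,q)" unfolding Te[OF p q] by (rule sum.swap)
    finally show "vmat_star st T $$ (p,q) = T $$ (p,q)" .
  qed (use T in \<open>auto simp: vmat_star_def\<close>)
  thus ?thesis unfolding vmat_sa_def T_def[symmetric] using T by auto
qed

lemma index_vmat_triple_direct_sum:
  assumes A: "A \<in> carrier_mat n1 n1" and B: "B \<in> carrier_mat n2 n2" and p: "p < dim_row L" and q: "q < dim_col R"
  shows "vmat_triple sc L (direct_sum A B) R $$ (p,q) =
    (\<Sum>i<n1. \<Sum>j<n1. sc (L $$ (p,i) * R $$ (j,q)) (A $$ (i,j)))
    + (\<Sum>i<n2. \<Sum>j<n2. sc (L $$ (p,n1+i) * R $$ (n1+j,q)) (B $$ (i,j)))"
proof -
  define f where "f = (\<lambda>i j. sc (L $$ (p,i) * R $$ (j,q)) (direct_sum A B $$ (i,j)))"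
  have "vmat_triple sc L (direct_sum A B) R $$ (p,q) = (\<Sum>i<n1+n2. \<Sum>j<n1+n2. f i j)"
    unfolding f_def using p q A B by (subst index_vmat_triple) auto
  also have "\<dots> = (\<Sum>i<n1. \<Sum>j<n1. f i j) + (\<Sum>i<n1. \<Sum>j<n2. f i (n1+j))
     + ((\<Sum>i<n2. \<Sum>j<n1. f (n1+i) j) + (\<Sum>i<n2. \<Sum>j<n2. f (n1+i) (n1+j)))"
    by (simp add: sum_lessThan_add sum.distrib)
  also have "\<dots> = (\<Sum>i<n1. \<Sum>j<n1. f i j) + (\<Sum>i<n2. \<Sum>j<n2. f (n1+i) (n1+j))"
    unfolding f_def using A B by (auto simp: direct_sum_def sc_zero intro!: sum.neutral)
  finally show ?thesis unfolding f_def using A B by (simp add: direct_sum_def)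
qed

lemma vmat_triple_direct_sum:
  assumes L1: "L1 \<in> carrier_mat k1 n1" and L2: "L2 \<in> carrier_mat k2 n2"
    and A: "A \<in> carrier_mat n1 n1" and B: "B \<in> carrier_mat n2 n2"
    and R1: "R1 \<in> carrier_mat n1 k1" and R2: "R2 \<in> carrier_mat n2 k2"
  shows "vmat_triple sc (direct_sum L1 L2) (direct_sum A B) (direct_sum R1 R2) =
    direct_sum (vmat_triple sc L1 A R1) (vmat_triple sc L2 B R2)"
proof (rule eq_matI)
  fix p q assume "p < dim_row (direct_sum (vmat_triple sc L1 A R1) (vmat_triple sc L2 B R2))"
    "q < dim_col (direct_sum (vmat_triple sc L1 A R1) (vmat_triple sc L2 B R2))"
  hence p: "p < k1 + k2" and q: "q < k1 + k2" using L1 L2 R1 R2 by auto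
  let ?L = "direct_sum L1 L2" and ?R = "direct_sum R1 R2"
  have first: "(\<Sum>i<n1. \<Sum>j<n1. sc (?L $$ (p,i) * ?R $$ (j,q)) (A $$ (i,j))) =
    (if p < k1 \<and> q < k1 then vmat_triple sc L1 A R1 $$ (p,q) else 0)"
    using p q L1 L2 R1 R2 A
    by (auto simp: direct_sum_def index_vmat_triple sc_zero_left intro!: sum.neutral sum.cong)
  have second: "(\<Sum>i<n2. \<Sum>j<n2. sc (?L $$ (p,n1+i) * ?R $$ (n1+j,q)) (B $$ (i,j))) =
    (if k1 \<le> p \<and> k1 \<le> q then vmat_triple sc L2 B R2 $$ (p - k1, q - k1) else 0)"
    using p q L1 L2 R1 R2 B
    by (auto simp: direct_sum_def index_vmat_triple sc_zero_left intro!: sum.neutral sum.cong)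
  show "vmat_triple sc ?L (direct_sum A B) ?R $$ (p,q) = direct_sum (vmat_triple sc L1 A R1) (vmat_triple sc L2 B R2) $$ (p,q)"
    using index_vmat_triple_direct_sum[OF A B, of p ?L q ?R] p q L1 L2 R1 R2 first second
    by (auto simp: direct_sum_def)
qed (use L1 L2 R1 R2 in auto)

end

section \<open>The gauges of the unitization\<close>

lemma Inf_Int_upward_closed:
  fixes S1 S2 :: "real set"
  assumes ne1: "S1 \<noteq> {}" and ne2: "S2 \<noteq> {}" and b1: "bdd_below S1" and b2: "bdd_below S2"
    and u1: "\<And>t s. t \<in> S1 \<Longrightarrow> t \<le> s \<Longrightarrow> s \<in> S1" and u2: "\<And>t s. t \<in> S2 \<Longrightarrow> t \<le> s \<Longrightarrow> s \<in> S2"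
  shows "Inf (S1 \<inter> S2) = max (Inf S1) (Inf S2)"
proof (rule antisym)
  have b: "bdd_below (S1 \<inter> S2)" using b1 by (meson bdd_below_mono inf_le1)
  show "Inf (S1 \<inter> S2) \<le> max (Inf S1) (Inf S2)"
  proof (rule field_le_epsilon)
    fix e :: real assume e: "0 < e"
    obtain s1 where s1: "s1 \<in> S1" "s1 < Inf S1 + e" using cInf_less_iff[OF ne1 b1, of "Inf S1 + e"] e by auto
    obtain s2 where s2: "s2 \<in> S2" "s2 < Inf S2 + e" using cInf_less_iff[OF ne2 b2, of "Inf S2 + e"] e by auto
    have "max s1 s2 \<in> S1 \<inter> S2" using u1[OF s1(1)] u2[OF s2(1)] by auto
    hence "Inf (S1 \<inter> S2) \<le> max s1 s2" by (rule cInf_lower[OF _ b])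
    thus "Inf (S1 \<inter> S2) \<le> max (Inf S1) (Inf S2) + e" using s1 s2 by linarith
  qed
  obtain t1 t2 where t1: "t1 \<in> S1" and t2: "t2 \<in> S2" using ne1 ne2 by auto
  have "S1 \<inter> S2 \<noteq> {}" using u1[OF t1, of "max t1 t2"] u2[OF t2, of "max t1 t2"] by auto
  thus "max (Inf S1) (Inf S2) \<le> Inf (S1 \<inter> S2)"
    using cInf_lower[OF _ b1] cInf_lower[OF _ b2] by (intro cInf_greatest) auto
qed

lemma le_mult_Inf:
  fixes S :: "real set"
  assumes ne: "S \<noteq> {}" and c: "0 \<le> c" and le: "\<And>t. t \<in> S \<Longrightarrow> x \<le> c * t"
  shows "x \<le> c * Inf S"
proof (cases "c = 0")
  case True
  thus ?thesis using ne le by auto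
next
  case False
  hence "x / c \<le> Inf S" using ne le c by (intro cInf_greatest) (auto simp: divide_le_eq mult.commute)
  thus ?thesis using False c by (simp add: divide_le_eq mult.commute)
qed

lemma unit_set_pos: "t \<in> unit_set sc \<nu> n A X \<Longrightarrow> 0 < t"
  unfolding unit_set_def by auto

lemma unit_set_bdd_below: "bdd_below (unit_set sc \<nu> n A X)"
  by (rule bdd_belowI[of _ 0]) (auto dest: unit_set_pos)

locale LinfMOS =
  fixes sc :: "complex \<Rightarrow> 'v::ab_group_add \<Rightarrow> 'v" and st :: "'v \<Rightarrow> 'v"
    and \<nu> :: "nat \<Rightarrow> 'v mat \<Rightarrow> real"
  assumes LinfMOS: "is_LinfMOS sc st \<nu>"
begin

sublocale star_space sc st
  using LinfMOS unfolding is_LinfMOS_def by unfold_locales auto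

lemma gauge_nonneg: "n \<ge> 1 \<Longrightarrow> A \<in> vmat_sa st n \<Longrightarrow> 0 \<le> \<nu> n A"
  using LinfMOS unfolding is_LinfMOS_def proper_gauge_on_def by auto

lemma gauge_congruence_le: "n \<ge> 1 \<Longrightarrow> k \<ge> 1 \<Longrightarrow> A \<in> vmat_sa st n \<Longrightarrow> Z \<in> carrier_mat n k \<Longrightarrow>
  \<nu> k (vmat_triple sc (mat_adjoint Z) A Z) \<le> (op_norm Z)\<^sup>2 * \<nu> n A"
  using LinfMOS unfolding is_LinfMOS_def by auto

lemma gauge_direct_sum: "n \<ge> 1 \<Longrightarrow> k \<ge> 1 \<Longrightarrow> A \<in> vmat_sa st n \<Longrightarrow> B \<in> vmat_sa st k \<Longrightarrow>
  \<nu> (n + k) (direct_sum A B) = max (\<nu> n A) (\<nu> k B)"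
  using LinfMOS unfolding is_LinfMOS_def by auto

lemma gauge_invsqrt_congruence_le:
  assumes n: "n \<ge> 1" and k: "k \<ge> 1" and A: "A \<in> vmat_sa st n"
    and Ppd: "cmat_pd n P" and Qpd: "cmat_pd k Q" and Z: "Z \<in> carrier_mat n k"
    and le: "\<And>v. v \<in> carrier_vec k \<Longrightarrow> Re (qform P (Z *\<^sub>v v)) \<le> Re (qform Q v)"
  shows "\<nu> k (vmat_triple sc (cmat_invsqrt k Q) (vmat_triple sc (mat_adjoint Z) A Z) (cmat_invsqrt k Q))
    \<le> \<nu> n (vmat_triple sc (cmat_invsqrt n P) A (cmat_invsqrt n P))"
proof -
  define R where "R = cmat_invsqrt n P"
  define R' where "R' = cmat_invsqrt k Q"
  obtain W where W: "W \<in> carrier_mat n k" "(op_norm W)\<^sup>2 \<le> 1" "mat_adjoint W * R = R' * mat_adjoint Z" "R * W = Z * R'"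
    using invsqrt_congruence_contraction[OF Ppd Qpd Z le] unfolding R_def R'_def by metis
  note pr = cmat_invsqrt[OF Ppd, folded R_def] and pr' = cmat_invsqrt[OF Qpd, folded R'_def]
  have Ac: "A \<in> carrier_mat n n" using A unfolding vmat_sa_def by auto
  define B where "B = vmat_triple sc R A R"
  have B: "B \<in> vmat_sa st n" unfolding B_def using vmat_triple_sa[OF A pr(1)] pr(2) by simp
  have "vmat_triple sc R' (vmat_triple sc (mat_adjoint Z) A Z) R' = vmat_triple sc (R' * mat_adjoint Z) A (Z * R')"
    using pr'(1) Z Ac by (intro vmat_triple_triple) auto
  also have "\<dots> = vmat_triple sc (mat_adjoint W) B W"
    unfolding W(3,4)[symmetric] B_def using W(1) pr(1) Ac by (intro vmat_triple_triple[symmetric]) auto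
  finally have "\<nu> k (vmat_triple sc R' (vmat_triple sc (mat_adjoint Z) A Z) R') \<le> (op_norm W)\<^sup>2 * \<nu> n B"
    using gauge_congruence_le[OF n k B W(1)] by simp
  also have "\<dots> \<le> \<nu> n B" using W(2) gauge_nonneg[OF n B] by (simp add: mult_left_le_one_le)
  finally show ?thesis unfolding B_def R_def R'_def .
qed

lemma unit_set_congruence:
  assumes n: "n \<ge> 1" and k: "k \<ge> 1" and A: "A \<in> vmat_sa st n" and X: "X \<in> cmat_sa n"
    and Z: "Z \<in> carrier_mat n k" and t: "t \<in> unit_set sc \<nu> n A X" and s: "(op_norm Z)\<^sup>2 * t < s"
  shows "s \<in> unit_set sc \<nu> k (vmat_triple sc (mat_adjoint Z) A Z) (mat_adjoint Z * X * Z)"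
proof -
  define P where "P = shiftm n t X"
  define Q where "Q = shiftm k s (mat_adjoint Z * X * Z)"
  have Xc: "X \<in> carrier_mat n n" and Xh: "mat_adjoint X = X" using X unfolding cmat_sa_def by auto
  have t0: "0 < t" and Ppd: "cmat_pd n P"
    and nt: "\<nu> n (vmat_triple sc (cmat_invsqrt n P) A (cmat_invsqrt n P)) \<le> 1"
    using t unfolding unit_set_def P_def by auto
  have s0: "0 < s" using s t0 by (smt (verit) zero_le_power2 mult_nonneg_nonneg)
  have Qsa: "Q \<in> cmat_sa k"
    unfolding Q_def using mat_adjoint_congruence[OF Z Xc Xh] Z Xc by (intro shiftm_sa) (auto simp: cmat_sa_def)
  have PQ: "Re (qform P (Z *\<^sub>v v)) + (s - (op_norm Z)\<^sup>2 * t) * cnorm2 v \<le> Re (qform Q v)"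
    if "v \<in> carrier_vec k" for v
    unfolding P_def Q_def by (rule Re_qform_shiftm_congruence_ge[OF Xc Z that t0[THEN less_imp_le]])
  have PZ: "0 \<le> Re (qform P (Z *\<^sub>v v))" if "v \<in> carrier_vec k" for v
    using Ppd Z that unfolding cmat_pd_def by (auto intro: cmat_posD(3))
  have Qpd: "cmat_pd k Q"
  proof (rule cmat_pd_if_coercive[OF Qsa])
    show "0 < s - (op_norm Z)\<^sup>2 * t" using s by simp
    show "(s - (op_norm Z)\<^sup>2 * t) * cnorm2 v \<le> Re (qform Q v)" if "v \<in> carrier_vec k" for v
      using PQ[OF that] PZ[OF that] by linarith
  qed
  have "\<nu> k (vmat_triple sc (cmat_invsqrt k Q) (vmat_triple sc (mat_adjoint Z) A Z) (cmat_invsqrt k Q)) \<le> 1"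
  proof (rule order.trans[OF gauge_invsqrt_congruence_le[OF n k A Ppd Qpd Z] nt])
    show "Re (qform P (Z *\<^sub>v v)) \<le> Re (qform Q v)" if "v \<in> carrier_vec k" for v
      using PQ[OF that] s cnorm2_nonneg[of v] by (smt (verit) mult_nonneg_nonneg)
  qed
  thus ?thesis unfolding unit_set_def using s0 Qpd unfolding Q_def by auto
qed

lemma unit_set_upward_closed:
  assumes n: "n \<ge> 1" and A: "A \<in> vmat_sa st n" and X: "X \<in> cmat_sa n"
    and t: "t \<in> unit_set sc \<nu> n A X" and ts: "t \<le> s"
  shows "s \<in> unit_set sc \<nu> n A X"
proof (cases "t = s")
  case False
  have "(op_norm (1\<^sub>m n :: complex mat))\<^sup>2 * t \<le> t"
    using mult_right_mono[OF op_norm_one_le[of n], of t] unit_set_pos[OF t] by simp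
  hence "(op_norm (1\<^sub>m n :: complex mat))\<^sup>2 * t < s" using ts False by linarith
  moreover have "1\<^sub>m n * X * 1\<^sub>m n = X" "vmat_triple sc (1\<^sub>m n) A (1\<^sub>m n) = A"
    using A X vmat_triple_one[of A n] unfolding vmat_sa_def cmat_sa_def
    by (auto simp: left_mult_one_mat right_mult_one_mat)
  ultimately show ?thesis using unit_set_congruence[OF n n A X one_carrier_mat t] by simp
qed (use t in simp)

lemma unit_set_nonempty:
  assumes n: "n \<ge> 1" and A: "A \<in> vmat_sa st n" and X: "X \<in> cmat_sa n"
  shows "unit_set sc \<nu> n A X \<noteq> {}"
proof -
  have Xc: "X \<in> carrier_mat n n" using X unfolding cmat_sa_def by auto
  obtain c where c: "0 \<le> c" "\<And>v. v \<in> carrier_vec n \<Longrightarrow> Re (qform X v) \<le> c * cnorm2 v"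
    using Re_qform_bounded[OF Xc] by blast
  define a where "a = \<nu> n A"
  have a: "0 \<le> a" unfolding a_def by (rule gauge_nonneg[OF n A])
  define t where "t = c + a + 1"
  define P where "P = shiftm n t X"
  define R where "R = cmat_invsqrt n P"
  have Psa: "P \<in> cmat_sa n" unfolding P_def by (rule shiftm_sa[OF X])
  have coercive: "(a + 1) * cnorm2 v \<le> Re (qform P v)" if "v \<in> carrier_vec n" for v
    using Re_qform_shiftm[OF Xc that, of t] c(2)[OF that] unfolding P_def t_def by (simp add: algebra_simps)
  have Ppd: "cmat_pd n P" using cmat_pd_if_coercive[OF Psa _ coercive] a by simp
  have R: "R \<in> carrier_mat n n" "mat_adjoint R = R" using cmat_invsqrt[OF Ppd] unfolding R_def by auto
  have "\<nu> n (vmat_triple sc R A R) \<le> (op_norm R)\<^sup>2 * a"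
    using gauge_congruence_le[OF n n A R(1)] R(2) unfolding a_def by simp
  also have "\<dots> \<le> 1 / (a + 1) * a"
    using op_norm_invsqrt_le[OF Psa _ coercive] a unfolding R_def by (intro mult_right_mono) auto
  also have "\<dots> \<le> 1" using a by (simp add: field_simps)
  finally have "t \<in> unit_set sc \<nu> n A X"
    unfolding unit_set_def using Ppd a c(1) unfolding P_def R_def t_def by auto
  thus ?thesis by auto
qed

lemma unit_set_direct_sum:
  assumes n: "n \<ge> 1" and k: "k \<ge> 1" and A: "A \<in> vmat_sa st n" and B: "B \<in> vmat_sa st k"
    and X: "X \<in> cmat_sa n" and Y: "Y \<in> cmat_sa k"
  shows "unit_set sc \<nu> (n+k) (direct_sum A B) (direct_sum X Y) = unit_set sc \<nu> n A X \<inter> unit_set sc \<nu> k B Y"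
proof -
  have Xc: "X \<in> carrier_mat n n" and Yc: "Y \<in> carrier_mat k k" using X Y unfolding cmat_sa_def by auto
  have Ac: "A \<in> carrier_mat n n" and Bc: "B \<in> carrier_mat k k" using A B unfolding vmat_sa_def by auto
  have pd: "cmat_pd (n+k) (shiftm (n+k) t (direct_sum X Y)) \<longleftrightarrow> cmat_pd n (shiftm n t X) \<and> cmat_pd k (shiftm k t Y)" for t
    unfolding shiftm_direct_sum[OF Xc Yc] using cmat_pd_direct_sum_iff Xc Yc by auto
  have gauge: "\<nu> (n+k) (vmat_triple sc (cmat_invsqrt (n+k) (shiftm (n+k) t (direct_sum X Y))) (direct_sum A B)
        (cmat_invsqrt (n+k) (shiftm (n+k) t (direct_sum X Y))))
    = max (\<nu> n (vmat_triple sc (cmat_invsqrt n (shiftm n t X)) A (cmat_invsqrt n (shiftm n t X))))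
          (\<nu> k (vmat_triple sc (cmat_invsqrt k (shiftm k t Y)) B (cmat_invsqrt k (shiftm k t Y))))"
    if p1: "cmat_pd n (shiftm n t X)" and p2: "cmat_pd k (shiftm k t Y)" for t
  proof -
    define R1 where "R1 = cmat_invsqrt n (shiftm n t X)"
    define R2 where "R2 = cmat_invsqrt k (shiftm k t Y)"
    note r1 = cmat_invsqrt[OF p1, folded R1_def] and r2 = cmat_invsqrt[OF p2, folded R2_def]
    have "cmat_invsqrt (n+k) (shiftm (n+k) t (direct_sum X Y)) = direct_sum R1 R2"
      unfolding shiftm_direct_sum[OF Xc Yc] R1_def R2_def by (rule cmat_invsqrt_direct_sum[OF p1 p2])
    moreover have "vmat_triple sc (direct_sum R1 R2) (direct_sum A B) (direct_sum R1 R2)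
       = direct_sum (vmat_triple sc R1 A R1) (vmat_triple sc R2 B R2)"
      by (rule vmat_triple_direct_sum[OF r1(1) r2(1) Ac Bc r1(1) r2(1)])
    moreover have "vmat_triple sc R1 A R1 \<in> vmat_sa st n" using vmat_triple_sa[OF A r1(1)] r1(2) by simp
    moreover have "vmat_triple sc R2 B R2 \<in> vmat_sa st k" using vmat_triple_sa[OF B r2(1)] r2(2) by simp
    ultimately show ?thesis unfolding R1_def[symmetric] R2_def[symmetric] using gauge_direct_sum[OF n k] by simp
  qed
  show ?thesis unfolding unit_set_def using pd gauge by auto
qed

lemma unit_gauge_nonneg: "0 \<le> unit_gauge sc \<nu> n A X" if "unit_set sc \<nu> n A X \<noteq> {}"
  unfolding unit_gauge_def using that by (intro cInf_greatest) (auto dest: unit_set_pos)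

lemma unit_gauge_direct_sum:
  assumes n: "n \<ge> 1" and k: "k \<ge> 1" and A: "A \<in> vmat_sa st n" and B: "B \<in> vmat_sa st k"
    and X: "X \<in> cmat_sa n" and Y: "Y \<in> cmat_sa k"
  shows "unit_gauge sc \<nu> (n+k) (direct_sum A B) (direct_sum X Y) = max (unit_gauge sc \<nu> n A X) (unit_gauge sc \<nu> k B Y)"
  unfolding unit_gauge_def unit_set_direct_sum[OF assms]
  by (rule Inf_Int_upward_closed[OF unit_set_nonempty[OF n A X] unit_set_nonempty[OF k B Y]
        unit_set_bdd_below unit_set_bdd_below unit_set_upward_closed[OF n A X] unit_set_upward_closed[OF k B Y]])

lemma unit_gauge_congruence_le:
  assumes n: "n \<ge> 1" and k: "k \<ge> 1" and A: "A \<in> vmat_sa st n" and X: "X \<in> cmat_sa n"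
    and Z: "Z \<in> carrier_mat n k"
  shows "unit_gauge sc \<nu> k (vmat_triple sc (mat_adjoint Z) A Z) (mat_adjoint Z * X * Z)
    \<le> (op_norm Z)\<^sup>2 * unit_gauge sc \<nu> n A X"
  unfolding unit_gauge_def
proof (rule le_mult_Inf[OF unit_set_nonempty[OF n A X]])
  fix t assume t: "t \<in> unit_set sc \<nu> n A X"
  show "Inf (unit_set sc \<nu> k (vmat_triple sc (mat_adjoint Z) A Z) (mat_adjoint Z * X * Z)) \<le> (op_norm Z)\<^sup>2 * t"
  proof (rule field_le_epsilon)
    fix e :: real assume "0 < e"
    hence "(op_norm Z)\<^sup>2 * t + e \<in> unit_set sc \<nu> k (vmat_triple sc (mat_adjoint Z) A Z) (mat_adjoint Z * X * Z)"
      by (intro unit_set_congruence[OF n k A X Z t]) simp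
    thus "Inf (unit_set sc \<nu> k (vmat_triple sc (mat_adjoint Z) A Z) (mat_adjoint Z * X * Z)) \<le> (op_norm Z)\<^sup>2 * t + e"
      by (rule cInf_lower[OF _ unit_set_bdd_below])
  qed
qed simp

end

theorem lemma3p8:
  fixes sc :: "complex \<Rightarrow> 'v::ab_group_add \<Rightarrow> 'v" and st :: "'v \<Rightarrow> 'v"
    and \<nu> :: "nat \<Rightarrow> 'v mat \<Rightarrow> real" and n k :: nat
    and A B :: "'v mat" and X Y Z :: "complex mat"
  assumes "is_LinfMOS sc st \<nu>"
    and "n \<ge> 1" and "k \<ge> 1"
    and "A \<in> vmat_sa st n" and "X \<in> cmat_sa n"
    and "B \<in> vmat_sa st k" and "Y \<in> cmat_sa k"
    and "Z \<in> carrier_mat n k"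
  shows "unit_set sc \<nu> n A X \<noteq> {}
    \<and> 0 \<le> unit_gauge sc \<nu> n A X
    \<and> unit_gauge sc \<nu> (n + k) (direct_sum A B) (direct_sum X Y)
           = max (unit_gauge sc \<nu> n A X) (unit_gauge sc \<nu> k B Y)
    \<and> unit_gauge sc \<nu> k (vmat_triple sc (mat_adjoint Z) A Z) (mat_adjoint Z * X * Z)
           \<le> (op_norm Z)\<^sup>2 * unit_gauge sc \<nu> n A X"
proof -
  interpret LinfMOS sc st \<nu> by (rule LinfMOS.intro) fact
  have "unit_set sc \<nu> n A X \<noteq> {}" using unit_set_nonempty assms by blast
  thus ?thesis using unit_gauge_nonneg unit_gauge_direct_sum unit_gauge_congruence_le assms by blast
qed

end
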